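(* If $G$ is a connected cubic graph of order $n$ different from the Heawood graph, then $\gamma_{st}(G)\leq 2n/3$, and this bound is sharp.
   Context: For a vertex $v$, $N(v)$ is its open neighborhood. A signed total dominating function (STDF) of $G$ is a function $f:V(G)\to\{-1,1\}$ such that $\sum_{u\in N(v)}f(u)\geq 1$ for every vertex $v$; the signed total domination number $\gamma_{st}(G)$ is the minimum of $\sum_{v\in V(G)}f(v)$ over all STDFs $f$ of $G$. The Heawood graph is the cubic bipartite graph on 14 vertices that is the point–line incidence graph of the Fano plane. *)

theory Defs
  imports Main
begin

definition simple_graph :: "'a set \<Rightarrow> ('a \<Rightarrow> 'a \<Rightarrow> bool) \<Rightarrow> bool" where
  "simple_graph V E \<longleftrightarrow> finite V \<and> (\<forall>x y. E x y \<longrightarrow> x \<in> V \<and> y \<in> V)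
     \<and> (\<forall>x y. E x y \<longrightarrow> E y x) \<and> (\<forall>x. \<not> E x x)"

definition nbhd :: "'a set \<Rightarrow> ('a \<Rightarrow> 'a \<Rightarrow> bool) \<Rightarrow> 'a \<Rightarrow> 'a set" where
  "nbhd V E v = {u \<in> V. E v u}"

definition cubic :: "'a set \<Rightarrow> ('a \<Rightarrow> 'a \<Rightarrow> bool) \<Rightarrow> bool" where
  "cubic V E \<longleftrightarrow> (\<forall>v \<in> V. card (nbhd V E v) = 3)"

definition connected_graph :: "'a set \<Rightarrow> ('a \<Rightarrow> 'a \<Rightarrow> bool) \<Rightarrow> bool" where
  "connected_graph V E \<longleftrightarrow> V \<noteq> {} \<and> (\<forall>u \<in> V. \<forall>v \<in> V. E\<^sup>*\<^sup>* u v)"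

definition is_STDF :: "'a set \<Rightarrow> ('a \<Rightarrow> 'a \<Rightarrow> bool) \<Rightarrow> ('a \<Rightarrow> int) \<Rightarrow> bool" where
  "is_STDF V E f \<longleftrightarrow> (\<forall>v \<in> V. f v \<in> {-1, 1}) \<and> (\<forall>v \<in> V. (\<Sum>u \<in> nbhd V E v. f u) \<ge> 1)"

definition gamma_st :: "'a set \<Rightarrow> ('a \<Rightarrow> 'a \<Rightarrow> bool) \<Rightarrow> int" where
  "gamma_st V E = Min {(\<Sum>v \<in> V. f v) | f. is_STDF V E f}"

text \<open>The Heawood graph: points 0..6 and lines 7..13 of the Fano plane,
line 7+i = {i, i+1, i+3} (mod 7); point p is adjacent to line 7+i iff p lies on it.\<close>

definition heawood_V :: "nat set" where
  "heawood_V = {0..<14}"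

definition heawood_inc :: "nat \<Rightarrow> nat \<Rightarrow> bool" where
  "heawood_inc p i \<longleftrightarrow> p < 7 \<and> i < 7 \<and>
     (p = i mod 7 \<or> p = (i + 1) mod 7 \<or> p = (i + 3) mod 7)"

definition heawood_E :: "nat \<Rightarrow> nat \<Rightarrow> bool" where
  "heawood_E x y \<longleftrightarrow>
     (x < 7 \<and> 7 \<le> y \<and> y < 14 \<and> heawood_inc x (y - 7)) \<or>
     (y < 7 \<and> 7 \<le> x \<and> x < 14 \<and> heawood_inc y (x - 7))"

definition graph_iso :: "'a set \<Rightarrow> ('a \<Rightarrow> 'a \<Rightarrow> bool) \<Rightarrow> 'b set \<Rightarrow> ('b \<Rightarrow> 'b \<Rightarrow> bool) \<Rightarrow> bool" where
  "graph_iso V E W F \<longleftrightarrow> (\<exists>h. bij_betw h V W \<and> (\<forall>x \<in> V. \<forall>y \<in> V. E x y \<longleftrightarrow> F (h x) (h y)))"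

definition is_heawood :: "'a set \<Rightarrow> ('a \<Rightarrow> 'a \<Rightarrow> bool) \<Rightarrow> bool" where
  "is_heawood V E \<longleftrightarrow> graph_iso V E heawood_V heawood_E"

end

theory Submission
  imports Defs
begin

text \<open>With values in {-1, 1}, a function on a cubic graph is an STDF iff every vertex has at
  most one neighbour of value -1, i.e. iff its negative vertices form an open packing (no two
  of them have a common neighbour).  A maximum open packing of size \<rho> thus gives
  gamma_st \<le> n - 2\<rho>, and it suffices to find an open packing of size n/6.

  Open packings are the independent sets of the graph H joining two vertices with a common
  neighbour, which has maximum degree at most 6.  A Brooks-type theorem, proved by a
  Kempe chain argument, yields an independent set of size |C|/6 in every H-component C that is
  not a K_7.  Since G is connected, H has at most two components, and two of them form the sides
  of a bipartition of G.  A K_7 component together with cubicity makes its side the point set of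
  a Fano plane, so G is the Heawood graph; a single K_7 component is ruled out by parity.

  Equality is attained by a bipartite cubic graph on 12 vertices with gamma_st = 8.\<close>

section \<open>Independent sets in graphs of bounded degree\<close>

definition nbrs :: "('a \<Rightarrow> 'a \<Rightarrow> bool) \<Rightarrow> 'a \<Rightarrow> 'a set" where
  "nbrs R x = {y. R x y}"

definition independent :: "('a \<Rightarrow> 'a \<Rightarrow> bool) \<Rightarrow> 'a set \<Rightarrow> bool" where
  "independent R I \<longleftrightarrow> (\<forall>x\<in>I. \<forall>y\<in>I. \<not> R x y)"

definition proper_colouring :: "('a \<Rightarrow> 'a \<Rightarrow> bool) \<Rightarrow> 'a set \<Rightarrow> ('a \<Rightarrow> nat) \<Rightarrow> bool" where
  "proper_colouring R S c \<longleftrightarrow> (\<forall>x\<in>S. \<forall>y\<in>S. R x y \<longrightarrow> c x \<noteq> c y)"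

lemma degenerate_colouring:
  assumes fin: "finite S" and sym: "\<And>x y. R x y \<Longrightarrow> R y x" and irr: "\<And>x. \<not> R x x"
    and degenerate: "\<And>T. T \<subseteq> S \<Longrightarrow> T \<noteq> {} \<Longrightarrow> \<exists>w\<in>T. card (nbrs R w \<inter> T) < q"
  shows "\<exists>c. (\<forall>x\<in>S. c x < q) \<and> proper_colouring R S c"
proof -
  have "\<exists>c. (\<forall>x\<in>T. c x < q) \<and> proper_colouring R T c" if "T \<subseteq> S" for T
    using finite_subset[OF that fin] that
  proof (induction T rule: finite_psubset_induct)
    case (psubset T)
    show ?case
    proof (cases "T = {}")
      case True
      thus ?thesis by (auto simp: proper_colouring_def)
    next
      case False
      then obtain w where w: "w \<in> T" "card (nbrs R w \<inter> T) < q"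
        using degenerate[OF psubset.prems] by blast
      obtain c' where c': "\<forall>x\<in>T - {w}. c' x < q" "proper_colouring R (T - {w}) c'"
        using psubset.IH[of "T - {w}"] w(1) psubset.prems by blast
      define used where "used = c' ` (nbrs R w \<inter> T)"
      have "card used < q"
        unfolding used_def using w(2) psubset.hyps by (meson card_image_le finite_Int le_less_trans)
      moreover have "finite used" unfolding used_def using psubset.hyps by simp
      ultimately have "\<not> {..<q} \<subseteq> used" using card_mono[of used "{..<q}"] by auto
      then obtain col where col: "col < q" "col \<notin> used" by auto
      define c where "c = c'(w := col)"
      have "proper_colouring R T c"
        unfolding proper_colouring_def
      proof (intro ballI impI)
        fix x y assume xy: "x \<in> T" "y \<in> T" "R x y"
        have "x \<noteq> y" using xy(3) irr by auto
        show "c x \<noteq> c y"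
        proof (cases "x = w \<or> y = w")
          case True
          thus ?thesis using xy sym col(2) \<open>x \<noteq> y\<close> by (auto simp: c_def used_def nbrs_def)
        next
          case False
          thus ?thesis using xy c'(2) by (auto simp: c_def proper_colouring_def)
        qed
      qed
      moreover have "\<forall>x\<in>T. c x < q" using c'(1) col(1) by (auto simp: c_def)
      ultimately show ?thesis by blast
    qed
  qed
  thus ?thesis by blast
qed

lemma colour_class_independent_large:
  assumes fin: "finite S" and c: "\<forall>x\<in>S. c x < q" "proper_colouring R S c" and q: "0 < q"
  shows "\<exists>I\<subseteq>S. independent R I \<and> card S \<le> q * card I"
proof -
  define members where "members i = {x\<in>S. c x = i}" for i
  define m where "m = Max ((\<lambda>i. card (members i)) ` {..<q})"
  have "m \<in> (\<lambda>i. card (members i)) ` {..<q}" unfolding m_def using q by (intro Max_in) auto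
  then obtain i0 where i0: "i0 < q" "card (members i0) = m" by auto
  have "card S = card (\<Union>i<q. members i)"
    using c(1) by (intro arg_cong[where f = card]) (auto simp: members_def)
  also have "\<dots> \<le> (\<Sum>i<q. card (members i))" by (rule card_UN_le) simp
  also have "\<dots> \<le> q * m"
    using sum_bounded_above[of "{..<q}" "\<lambda>i. card (members i)" m] by (simp add: m_def)
  finally have "card S \<le> q * card (members i0)" using i0(2) by simp
  moreover have "independent R (members i0)"
    using c(2) unfolding independent_def proper_colouring_def members_def by blast
  moreover have "members i0 \<subseteq> S" by (auto simp: members_def)
  ultimately show ?thesis by blast
qed

lemma rtranclp_leaves_subset:
  assumes "R\<^sup>*\<^sup>* t s" "t \<in> T" "s \<notin> T"
  shows "\<exists>w\<in>T. \<exists>z. R w z \<and> z \<notin> T"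
  using assms by (induction rule: rtranclp_induct) blast+

lemma rtranclp_last_step_closer:
  assumes "Q\<^sup>*\<^sup>* x y" "y \<noteq> x"
  shows "\<exists>p. Q\<^sup>*\<^sup>* x p \<and> Q p y \<and> (LEAST n. (Q ^^ n) x p) < (LEAST n. (Q ^^ n) x y)"
proof -
  define n where "n = (LEAST n. (Q ^^ n) x y)"
  have "(Q ^^ n) x y" unfolding n_def using assms(1) by (rule LeastI_ex[OF rtranclp_imp_relpowp])
  moreover have "n \<noteq> 0" using calculation assms(2) by (intro notI) simp
  ultimately obtain m p where m: "n = Suc m" "(Q ^^ m) x p" "Q p y"
    by (metis not0_implies_Suc relpowp_Suc_E)
  have "(LEAST n. (Q ^^ n) x p) \<le> m" using m(2) by (rule Least_le)
  with m show ?thesis unfolding n_def[symmetric] by (auto intro: relpowp_imp_rtranclp)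
qed

lemma rtranclp_avoiding_start:
  assumes "Q\<^sup>*\<^sup>* x z" "z \<noteq> x" "\<And>z. Q x z \<Longrightarrow> z = u"
  shows "(\<lambda>a b. Q a b \<and> a \<noteq> x \<and> b \<noteq> x)\<^sup>*\<^sup>* u z"
  using assms(1,2)
proof (induction rule: rtranclp_induct)
  case (step y z)
  thus ?case using assms(3) by (cases "y = x") (auto intro: rtranclp.rtrancl_into_rtrancl)
qed simp

locale bounded_degree_component =
  fixes R :: "'a \<Rightarrow> 'a \<Rightarrow> bool" and C :: "'a set" and d :: nat
  assumes finite_C: "finite C" and sym: "\<And>x y. R x y \<Longrightarrow> R y x" and irrefl: "\<And>x. \<not> R x x"
    and nbrs_closed: "\<And>x. x \<in> C \<Longrightarrow> nbrs R x \<subseteq> C"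
    and degree_le: "\<And>x. x \<in> C \<Longrightarrow> card (nbrs R x) \<le> d"
    and connected: "\<And>a b. a \<in> C \<Longrightarrow> b \<in> C \<Longrightarrow> R\<^sup>*\<^sup>* a b"
begin

lemma finite_nbrs: "x \<in> C \<Longrightarrow> finite (nbrs R x)"
  using nbrs_closed finite_C finite_subset by blast

lemma proper_subset_low_degree:
  assumes "T \<subseteq> C" "T \<noteq> {}" "\<not> C \<subseteq> T"
  shows "\<exists>w\<in>T. card (nbrs R w \<inter> T) < d"
proof -
  obtain t s where ts: "t \<in> T" "s \<in> C" "s \<notin> T" using assms(2,3) by blast
  have "R\<^sup>*\<^sup>* t s" using ts assms(1) by (intro connected) auto
  then obtain w z where wz: "w \<in> T" "R w z" "z \<notin> T"
    using rtranclp_leaves_subset ts by metis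
  have wC: "w \<in> C" using wz(1) assms(1) by auto
  have "nbrs R w \<inter> T \<subset> nbrs R w" using wz by (auto simp: nbrs_def)
  hence "card (nbrs R w \<inter> T) < card (nbrs R w)" using finite_nbrs[OF wC] by (rule psubset_card_mono[rotated])
  thus ?thesis using degree_le[OF wC] wz(1) by (intro bexI[of _ w]) auto
qed

lemma independent_set_if_low_degree_vertex:
  assumes r: "r \<in> C" "card (nbrs R r) < d"
  shows "\<exists>I\<subseteq>C. independent R I \<and> card C \<le> d * card I"
proof -
  have "\<exists>c. (\<forall>x\<in>C. c x < d) \<and> proper_colouring R C c"
  proof (rule degenerate_colouring[OF finite_C sym irrefl])
    fix T assume T: "T \<subseteq> C" "T \<noteq> {}"
    show "\<exists>w\<in>T. card (nbrs R w \<inter> T) < d"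
    proof (cases "C \<subseteq> T")
      case True
      have "card (nbrs R r \<inter> T) \<le> card (nbrs R r)" using finite_nbrs[OF r(1)] by (intro card_mono) auto
      thus ?thesis using True r by (intro bexI[of _ r]) auto
    next
      case False
      thus ?thesis using proper_subset_low_degree T by blast
    qed
  qed
  then obtain c where "\<forall>x\<in>C. c x < d" "proper_colouring R C c" by blast
  with colour_class_independent_large[OF finite_C] r(2) show ?thesis by simp
qed

lemma colouring_minus_vertex:
  assumes "v \<in> C"
  shows "\<exists>c. (\<forall>x\<in>C - {v}. c x < d) \<and> proper_colouring R (C - {v}) c"
proof (rule degenerate_colouring[OF _ sym irrefl])
  show "finite (C - {v})" using finite_C by simp
  fix T assume "T \<subseteq> C - {v}" "T \<noteq> {}"
  thus "\<exists>w\<in>T. card (nbrs R w \<inter> T) < d" using proper_subset_low_degree[of T] assms by blast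
qed

lemma independent_set_minus_one:
  assumes "v \<in> C" "0 < d"
  shows "\<exists>I\<subseteq>C. independent R I \<and> card C \<le> d * card I + 1"
proof -
  obtain c where "\<forall>x\<in>C - {v}. c x < d" "proper_colouring R (C - {v}) c"
    using colouring_minus_vertex[OF assms(1)] by blast
  from colour_class_independent_large[OF _ this] finite_C assms(2)
  obtain I where "I \<subseteq> C - {v}" "independent R I" "card (C - {v}) \<le> d * card I" by auto
  moreover have "card (C - {v}) = card C - 1" using assms(1) finite_C by simp
  ultimately show ?thesis by auto
qed

end

section \<open>Kempe chains in a critical component\<close>

text \<open>A hypothetical exception to the bound card C \<le> d * card I: a d-regular component on
  d k + 1 vertices without independent sets of size k + 1.  Every d-colouring of the component
  minus a vertex v then has all colour classes of size exactly k, and Kempe chain arguments show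
  that the neighbours of v are pairwise adjacent, so that the component is K_(d+1).\<close>

locale critical_component = bounded_degree_component +
  fixes v :: 'a and k :: nat
  assumes three_le_d: "3 \<le> d"
    and regular: "\<And>x. x \<in> C \<Longrightarrow> card (nbrs R x) = d"
    and v_in_C: "v \<in> C"
    and card_C: "card C = d * k + 1"
    and independent_le: "\<And>I. I \<subseteq> C \<Longrightarrow> independent R I \<Longrightarrow> card I \<le> k"
begin

definition punctured :: "'a set" where
  "punctured = C - {v}"

definition colouring :: "('a \<Rightarrow> nat) \<Rightarrow> bool" where
  "colouring c \<longleftrightarrow> (\<forall>x\<in>punctured. c x < d) \<and> proper_colouring R punctured c"

definition colour_class :: "('a \<Rightarrow> nat) \<Rightarrow> nat \<Rightarrow> 'a set" where
  "colour_class c i = {x\<in>punctured. c x = i}"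

definition colour_degree :: "('a \<Rightarrow> nat) \<Rightarrow> 'a \<Rightarrow> nat \<Rightarrow> nat" where
  "colour_degree c u j = card {w\<in>punctured. R u w \<and> c w = j}"

lemma finite_punctured: "finite punctured"
  using finite_C by (simp add: punctured_def)

lemma card_punctured: "card punctured = d * k"
  using card_C v_in_C finite_C by (simp add: punctured_def)

lemma nbrs_v_subset: "nbrs R v \<subseteq> punctured"
  using nbrs_closed[OF v_in_C] irrefl by (auto simp: punctured_def nbrs_def)

lemma colouring_less: "colouring c \<Longrightarrow> u \<in> punctured \<Longrightarrow> c u < d"
  by (simp add: colouring_def)

lemma colouring_adjacent: "colouring c \<Longrightarrow> a \<in> punctured \<Longrightarrow> b \<in> punctured \<Longrightarrow> R a b \<Longrightarrow> c a \<noteq> c b"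
  by (simp add: colouring_def proper_colouring_def)

lemma colour_class_independent: "colouring c \<Longrightarrow> independent R (colour_class c i)"
  unfolding colouring_def proper_colouring_def independent_def colour_class_def by blast

lemma colour_class_card_le: "colouring c \<Longrightarrow> card (colour_class c i) \<le> k"
  by (rule independent_le[OF _ colour_class_independent]) (auto simp: colour_class_def punctured_def)

lemma colour_class_card:
  assumes c: "colouring c" and i: "i < d"
  shows "card (colour_class c i) = k"
proof -
  have "punctured = (\<Union>j<d. colour_class c j)"
    using c by (auto simp: colouring_def colour_class_def)
  hence "d * k = card (\<Union>j<d. colour_class c j)" using card_punctured by simp
  also have "\<dots> = (\<Sum>j<d. card (colour_class c j))"
    by (rule card_UN_disjoint) (auto simp: colour_class_def intro: finite_subset[OF _ finite_punctured])
  also have "\<dots> = card (colour_class c i) + (\<Sum>j\<in>{..<d} - {i}. card (colour_class c j))"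
    using i by (simp add: sum.remove)
  also have "(\<Sum>j\<in>{..<d} - {i}. card (colour_class c j)) \<le> (d - 1) * k"
    using sum_bounded_above[of "{..<d} - {i}" "\<lambda>j. card (colour_class c j)" k]
      colour_class_card_le[OF c] i by simp
  finally have "d * k \<le> card (colour_class c i) + (d - 1) * k" by simp
  moreover have "d * k = k + (d - 1) * k" using three_le_d by (cases d) auto
  ultimately show ?thesis using colour_class_card_le[OF c, of i] by linarith
qed

text \<open>A vertex outside a colour class must see it, or adding it would give an independent
  set of size k + 1.\<close>

lemma sees_full_colour_class:
  assumes c: "colouring c" and j: "j < d" and u: "u \<in> C" "u \<notin> colour_class c j"
  shows "\<exists>w\<in>colour_class c j. R u w"
proof (rule ccontr)
  assume "\<not> ?thesis"
  hence "independent R (insert u (colour_class c j))"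
    using colour_class_independent[OF c, of j] sym irrefl unfolding independent_def by blast
  hence "card (insert u (colour_class c j)) \<le> k"
    using u(1) by (intro independent_le) (auto simp: colour_class_def punctured_def)
  moreover have "card (insert u (colour_class c j)) = k + 1"
    using colour_class_card[OF c j] finite_punctured u(2) by (simp add: colour_class_def)
  ultimately show False by simp
qed

lemma every_colour_at_v:
  assumes "colouring c" "i < d"
  shows "\<exists>w\<in>nbrs R v. c w = i"
  using sees_full_colour_class[OF assms v_in_C]
  by (auto simp: colour_class_def punctured_def nbrs_def)

lemma colour_degree_pos:
  assumes c: "colouring c" and u: "u \<in> punctured" and j: "j < d" "j \<noteq> c u"
  shows "1 \<le> colour_degree c u j"
proof -
  obtain w where "w \<in> colour_class c j" "R u w"
    using sees_full_colour_class[OF c j(1)] u j(2) by (auto simp: colour_class_def punctured_def)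
  hence "{w\<in>punctured. R u w \<and> c w = j} \<noteq> {}" by (auto simp: colour_class_def)
  thus ?thesis using finite_punctured by (simp add: colour_degree_def Suc_le_eq card_gt_0_iff)
qed

lemma colour_degree_own:
  assumes "colouring c" "u \<in> punctured"
  shows "colour_degree c u (c u) = 0"
proof -
  have "{w\<in>punctured. R u w \<and> c w = c u} = {}"
    using colouring_adjacent[OF assms(1)] assms(2) by fastforce
  thus ?thesis unfolding colour_degree_def by (metis card.empty)
qed

lemma sum_colour_degree:
  assumes "colouring c" "u \<in> punctured"
  shows "(\<Sum>j<d. colour_degree c u j) = card (nbrs R u \<inter> punctured)"
proof -
  have "nbrs R u \<inter> punctured = (\<Union>j<d. {w\<in>punctured. R u w \<and> c w = j})"
    using assms(1) by (auto simp: colouring_def nbrs_def)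
  thus ?thesis unfolding colour_degree_def using finite_punctured
    by (simp, subst card_UN_disjoint) auto
qed

text \<open>Each of the d - 1 colours other than c u occurs at least once around u.\<close>

lemma colour_degree_sum_bound:
  assumes c: "colouring c" and u: "u \<in> punctured" and B: "B \<subseteq> {..<d} - {c u}"
  shows "(\<Sum>j\<in>B. colour_degree c u j) + (d - 1 - card B) \<le> card (nbrs R u \<inter> punctured)"
proof -
  let ?A = "{..<d} - {c u}"
  have cu: "c u < d" using colouring_less[OF c u] .
  have fin: "finite ?A" by simp
  have "d - 1 - card B = card (?A - B)" using B cu by (simp add: card_Diff_subset finite_subset)
  also have "\<dots> \<le> (\<Sum>j\<in>?A - B. colour_degree c u j)"
    using sum_mono[of "?A - B" "\<lambda>_. 1" "colour_degree c u"] colour_degree_pos[OF c u] by auto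
  finally have "(\<Sum>j\<in>B. colour_degree c u j) + (d - 1 - card B) \<le> (\<Sum>j\<in>?A. colour_degree c u j)"
    using sum.subset_diff[OF B fin, of "colour_degree c u"] by simp
  also have "\<dots> = (\<Sum>j<d. colour_degree c u j)"
    using cu colour_degree_own[OF c u] by (simp add: sum.remove[of "{..<d}" "c u"])
  finally show ?thesis using sum_colour_degree[OF c u] by simp
qed

lemma colour_degree_le_2:
  assumes c: "colouring c" and u: "u \<in> punctured" and j: "j < d" "j \<noteq> c u"
  shows "colour_degree c u j \<le> 2"
proof -
  have "card (nbrs R u \<inter> punctured) \<le> d"
    using degree_le[of u] finite_nbrs[of u] u
    by (auto simp: punctured_def intro: order_trans[OF card_mono])
  thus ?thesis using colour_degree_sum_bound[OF c u, of "{j}"] j three_le_d by simp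
qed

lemma colour_degree_not_both_2:
  assumes c: "colouring c" and u: "u \<in> punctured"
    and ij: "i < d" "i \<noteq> c u" "j < d" "j \<noteq> c u" "i \<noteq> j"
  shows "\<not> (2 \<le> colour_degree c u i \<and> 2 \<le> colour_degree c u j)"
proof -
  have "card (nbrs R u \<inter> punctured) \<le> d"
    using degree_le[of u] finite_nbrs[of u] u
    by (auto simp: punctured_def intro: order_trans[OF card_mono])
  thus ?thesis using colour_degree_sum_bound[OF c u, of "{i, j}"] ij three_le_d by auto
qed

lemma colour_degree_nbr_v:
  assumes c: "colouring c" and u: "u \<in> nbrs R v" and j: "j < d" "j \<noteq> c u"
  shows "colour_degree c u j = 1"
proof -
  have uC: "u \<in> C" and u': "u \<in> punctured" using u nbrs_closed[OF v_in_C] nbrs_v_subset by auto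
  have "nbrs R u \<inter> punctured = nbrs R u - {v}" using nbrs_closed[OF uC] by (auto simp: punctured_def)
  moreover have "v \<in> nbrs R u" using u sym by (auto simp: nbrs_def)
  ultimately have "card (nbrs R u \<inter> punctured) = d - 1" using regular[OF uC] finite_nbrs[OF uC] by simp
  thus ?thesis using colour_degree_sum_bound[OF c u', of "{j}"] colour_degree_pos[OF c u' j] j three_le_d
    by simp
qed

definition kempe_edge :: "('a \<Rightarrow> nat) \<Rightarrow> nat \<Rightarrow> nat \<Rightarrow> 'a \<Rightarrow> 'a \<Rightarrow> bool" where
  "kempe_edge c i j a b \<longleftrightarrow>
     a \<in> punctured \<and> b \<in> punctured \<and> R a b \<and> c a \<in> {i, j} \<and> c b \<in> {i, j}"

definition kempe_chain :: "('a \<Rightarrow> nat) \<Rightarrow> nat \<Rightarrow> nat \<Rightarrow> 'a \<Rightarrow> 'a set" where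
  "kempe_chain c i j x = {y. (kempe_edge c i j)\<^sup>*\<^sup>* x y}"

definition swap_colours :: "('a \<Rightarrow> nat) \<Rightarrow> nat \<Rightarrow> nat \<Rightarrow> 'a set \<Rightarrow> 'a \<Rightarrow> nat" where
  "swap_colours c i j K y =
     (if y \<in> K then (if c y = i then j else if c y = j then i else c y) else c y)"

lemma kempe_edge_commute: "kempe_edge c i j = kempe_edge c j i"
  unfolding kempe_edge_def by (intro ext) auto

lemma kempe_path_sym: "(kempe_edge c i j)\<^sup>*\<^sup>* a b \<Longrightarrow> (kempe_edge c i j)\<^sup>*\<^sup>* b a"
  by (rule symp_rtranclp[THEN sympD]) (auto simp: symp_def kempe_edge_def intro: sym)

lemma kempe_chain_self: "x \<in> kempe_chain c i j x"
  by (simp add: kempe_chain_def)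

lemma kempe_chain_closed: "y \<in> kempe_chain c i j x \<Longrightarrow> kempe_edge c i j y z \<Longrightarrow> z \<in> kempe_chain c i j x"
  unfolding kempe_chain_def by (simp add: rtranclp.rtrancl_into_rtrancl)

lemma kempe_chain_mem:
  assumes "x \<in> punctured" "c x \<in> {i, j}" "y \<in> kempe_chain c i j x"
  shows "y \<in> punctured \<and> c y \<in> {i, j}"
proof -
  have "(kempe_edge c i j)\<^sup>*\<^sup>* x y" using assms(3) by (simp add: kempe_chain_def)
  thus ?thesis by (induction rule: rtranclp_induct) (use assms(1,2) in \<open>auto simp: kempe_edge_def\<close>)
qed

text \<open>No edge leaves a Kempe chain towards a vertex of colour i or j, so swapping
  the two colours on the chain keeps the colouring proper.\<close>

lemma colouring_swap_colours:
  assumes c: "colouring c" and x: "x \<in> punctured" "c x \<in> {i, j}" and ij: "i < d" "j < d"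
  shows "colouring (swap_colours c i j (kempe_chain c i j x))"
proof -
  let ?K = "kempe_chain c i j x"
  have K: "y \<in> punctured \<and> c y \<in> {i, j}" if "y \<in> ?K" for y using kempe_chain_mem[OF x that] .
  have leave: "c b \<notin> {i, j}" if "a \<in> ?K" "b \<notin> ?K" "b \<in> punctured" "R a b" for a b
    using kempe_chain_closed[OF that(1), of b] that K[OF that(1)] by (auto simp: kempe_edge_def)
  have "swap_colours c i j ?K a \<noteq> swap_colours c i j ?K b"
    if ab: "a \<in> punctured" "b \<in> punctured" "R a b" for a b
    using colouring_adjacent[OF c ab] K leave[OF _ _ ab(2,3)] leave[OF _ _ ab(1) sym[OF ab(3)]]
    by (auto simp: swap_colours_def)
  moreover have "swap_colours c i j ?K y < d" if "y \<in> punctured" for y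
    using colouring_less[OF c that] ij by (simp add: swap_colours_def)
  ultimately show ?thesis by (simp add: colouring_def proper_colouring_def)
qed

text \<open>Both colour classes are full before and after the swap, so a Kempe chain carries
  equally many vertices of either colour.\<close>

lemma kempe_chain_balanced:
  assumes c: "colouring c" and x: "x \<in> punctured" "c x \<in> {i, j}" and ij: "i < d" "j < d" "i \<noteq> j"
  shows "card (kempe_chain c i j x \<inter> colour_class c i) = card (kempe_chain c i j x \<inter> colour_class c j)"
proof -
  let ?K = "kempe_chain c i j x" and ?c = "swap_colours c i j (kempe_chain c i j x)"
  have K: "y \<in> punctured \<and> c y \<in> {i, j}" if "y \<in> ?K" for y using kempe_chain_mem[OF x that] .
  have eq: "colour_class ?c i = (colour_class c i - ?K) \<union> (?K \<inter> colour_class c j)"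
    using K ij(3) by (auto simp: colour_class_def swap_colours_def)
  have fin: "finite (colour_class c i)" "finite ?K"
    using finite_punctured K by (auto simp: colour_class_def intro: finite_subset)
  have "card (colour_class ?c i) = card (colour_class c i - ?K) + card (?K \<inter> colour_class c j)"
    unfolding eq by (rule card_Un_disjoint) (use fin in auto)
  moreover have "card (colour_class c i - ?K) = card (colour_class c i) - card (?K \<inter> colour_class c i)"
    using card_Diff_subset_Int[of "colour_class c i" ?K] fin by (simp add: Int_commute)
  moreover have "card (?K \<inter> colour_class c i) \<le> card (colour_class c i)" using fin by (intro card_mono) auto
  moreover have "card (colour_class ?c i) = k" "card (colour_class c i) = k"
    using colour_class_card[OF colouring_swap_colours[OF c x ij(1,2)] ij(1)] colour_class_card[OF c ij(1)] .
  ultimately show ?thesis by linarith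
qed

lemma nbrs_v_rainbow:
  assumes c: "colouring c"
  shows "inj_on c (nbrs R v)"
proof -
  have fin: "finite (nbrs R v)" using finite_nbrs[OF v_in_C] .
  have "{..<d} \<subseteq> c ` nbrs R v" using every_colour_at_v[OF c] by fastforce
  hence "d \<le> card (c ` nbrs R v)" using fin by (metis card_lessThan card_mono finite_imageI)
  moreover have "card (c ` nbrs R v) \<le> card (nbrs R v)" using fin by (rule card_image_le)
  ultimately show ?thesis using regular[OF v_in_C] fin by (simp add: inj_on_iff_eq_card)
qed

definition nbr_of_colour :: "('a \<Rightarrow> nat) \<Rightarrow> nat \<Rightarrow> 'a" where
  "nbr_of_colour c i = (THE w. w \<in> nbrs R v \<and> c w = i)"

lemma nbr_of_colour_eq:
  assumes "colouring c" "w \<in> nbrs R v"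
  shows "nbr_of_colour c (c w) = w"
  unfolding nbr_of_colour_def using assms nbrs_v_rainbow[OF assms(1)]
  by (blast dest: inj_onD)

lemma nbr_of_colour:
  assumes "colouring c" "i < d"
  shows "nbr_of_colour c i \<in> nbrs R v" "c (nbr_of_colour c i) = i"
  using every_colour_at_v[OF assms] nbr_of_colour_eq[OF assms(1)] by force+

text \<open>Otherwise swapping i and j on the chain of the i-coloured neighbour of v would leave
  no neighbour of v coloured i.\<close>

lemma kempe_path_between_nbrs:
  assumes c: "colouring c" and ij: "i < d" "j < d" "i \<noteq> j"
  shows "(kempe_edge c i j)\<^sup>*\<^sup>* (nbr_of_colour c i) (nbr_of_colour c j)"
proof (rule ccontr)
  assume no_path: "\<not> ?thesis"
  let ?x = "nbr_of_colour c i"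
  let ?K = "kempe_chain c i j ?x"
  let ?c = "swap_colours c i j ?K"
  have x: "?x \<in> punctured" "c ?x \<in> {i, j}" using nbr_of_colour[OF c ij(1)] nbrs_v_subset by auto
  have c': "colouring ?c" using colouring_swap_colours[OF c x ij(1,2)] .
  obtain w where w: "w \<in> nbrs R v" "?c w = i" using every_colour_at_v[OF c' ij(1)] by blast
  show False
  proof (cases "w \<in> ?K")
    case True
    hence "c w = j" using w(2) kempe_chain_mem[OF x True] ij(3) by (auto simp: swap_colours_def)
    hence "w = nbr_of_colour c j" using nbr_of_colour_eq[OF c w(1)] by simp
    thus False using True no_path by (simp add: kempe_chain_def)
  next
    case False
    hence "w = ?x" using w nbr_of_colour_eq[OF c w(1)] by (simp add: swap_colours_def)
    thus False using False kempe_chain_self by metis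
  qed
qed

text \<open>Counting the edges of a spanning tree of the chain, each oriented from its
  j-coloured end to its i-coloured end.\<close>

lemma kempe_chain_card_le:
  assumes c: "colouring c" and x: "x \<in> punctured" "c x \<in> {i, j}"
  shows "card (kempe_chain c i j x)
    \<le> (\<Sum>b\<in>kempe_chain c i j x \<inter> colour_class c j. colour_degree c b i) + 1"
proof -
  let ?K = "kempe_chain c i j x" and ?Q = "kempe_edge c i j"
  have K: "y \<in> punctured \<and> c y \<in> {i, j}" if "y \<in> ?K" for y using kempe_chain_mem[OF x that] .
  have finK: "finite ?K" using finite_punctured K by (auto intro: finite_subset)
  define i_nbrs where "i_nbrs b = {a\<in>punctured. R b a \<and> c a = i}" for b
  define D where "D = Sigma (?K \<inter> colour_class c j) i_nbrs"
  have finD: "finite D" using finK finite_punctured by (auto simp: D_def i_nbrs_def)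
  have cardD: "card D = (\<Sum>b\<in>?K \<inter> colour_class c j. colour_degree c b i)"
    unfolding D_def using finK finite_punctured
    by (subst card_SigmaI) (auto simp: i_nbrs_def colour_degree_def)
  define dist where "dist y = (LEAST n. (?Q ^^ n) x y)" for y
  have "\<forall>y\<in>?K - {x}. \<exists>p. p \<in> ?K \<and> ?Q p y \<and> dist p < dist y"
    using rtranclp_last_step_closer[of ?Q x] unfolding dist_def kempe_chain_def by auto
  then obtain parent where parent: "\<And>y. y \<in> ?K - {x} \<Longrightarrow>
      parent y \<in> ?K \<and> ?Q (parent y) y \<and> dist (parent y) < dist y"
    by metis
  define edge where "edge y = (if c y = j then (y, parent y) else (parent y, y))" for y
  have "edge ` (?K - {x}) \<subseteq> D"
  proof
    fix z assume "z \<in> edge ` (?K - {x})"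
    then obtain y where y: "y \<in> ?K - {x}" "z = edge y" by blast
    have p: "parent y \<in> ?K" "?Q (parent y) y" using parent[OF y(1)] by auto
    hence "c (parent y) \<noteq> c y" using colouring_adjacent[OF c] by (auto simp: kempe_edge_def)
    thus "z \<in> D" using y p K[of y] K[of "parent y"] sym
      by (auto simp: edge_def D_def i_nbrs_def colour_class_def kempe_edge_def)
  qed
  moreover have "inj_on edge (?K - {x})"
  proof (rule inj_onI)
    fix y1 y2 assume y: "y1 \<in> ?K - {x}" "y2 \<in> ?K - {x}" "edge y1 = edge y2"
    have "dist (parent y1) < dist y1" "dist (parent y2) < dist y2" using parent y(1,2) by auto
    thus "y1 = y2" using y(3) by (auto simp: edge_def split: if_splits)
  qed
  ultimately have "card (?K - {x}) \<le> card D" using card_inj_on_le finD by blast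
  moreover have "card (?K - {x}) = card ?K - 1" using finK kempe_chain_self[of x] by simp
  ultimately show ?thesis using cardD by linarith
qed

lemma kempe_chain_unique_leaf:
  assumes c: "colouring c" and ij: "i < d" "j < d" "i \<noteq> j"
    and x: "x \<in> punctured" "c x \<in> {i, j}"
    and a: "a1 \<in> kempe_chain c i j x" "a2 \<in> kempe_chain c i j x" "c a1 = j" "c a2 = j"
      "colour_degree c a1 i = 1" "colour_degree c a2 i = 1"
  shows "a1 = a2"
proof (rule ccontr)
  assume a12: "a1 \<noteq> a2"
  let ?K = "kempe_chain c i j x"
  let ?Ki = "?K \<inter> colour_class c i" and ?Kj = "?K \<inter> colour_class c j"
  have K: "y \<in> punctured \<and> c y \<in> {i, j}" if "y \<in> ?K" for y using kempe_chain_mem[OF x that] .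
  have finK: "finite ?K" using finite_punctured K by (auto intro: finite_subset)
  have finKj: "finite ?Kj" using finK by simp
  have aKj: "a1 \<in> ?Kj" "a2 \<in> ?Kj" using a K by (auto simp: colour_class_def)
  have "?K = ?Ki \<union> ?Kj" using K by (auto simp: colour_class_def)
  also have "card \<dots> = card ?Ki + card ?Kj"
    using finK ij(3) by (intro card_Un_disjoint) (auto simp: colour_class_def)
  finally have "card ?K = card ?Ki + card ?Kj" .
  hence cardK: "card ?K = 2 * card ?Kj" using kempe_chain_balanced[OF c x ij] by simp
  have "(\<Sum>b\<in>?Kj. colour_degree c b i)
      = colour_degree c a1 i + colour_degree c a2 i + (\<Sum>b\<in>?Kj - {a1, a2}. colour_degree c b i)"
    using finKj aKj a12 by (simp add: sum.remove[of _ a1] sum.remove[of _ a2] Diff_insert2[symmetric])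
  also have "(\<Sum>b\<in>?Kj - {a1, a2}. colour_degree c b i) \<le> 2 * card (?Kj - {a1, a2})"
    using sum_bounded_above[of "?Kj - {a1, a2}" "\<lambda>b. colour_degree c b i" 2]
      colour_degree_le_2[OF c _ ij(1)] ij(3) by (auto simp: colour_class_def)
  also have "card (?Kj - {a1, a2}) = card ?Kj - 2" using finKj aKj a12 by (simp add: card_Diff_subset)
  finally have "(\<Sum>b\<in>?Kj. colour_degree c b i) + 2 \<le> 2 * card ?Kj"
    using a(5,6) card_mono[OF finKj, of "{a1, a2}"] aKj a12 by auto
  thus False using kempe_chain_card_le[OF c x] cardK by linarith
qed

text \<open>Otherwise, by kempe_chain_unique_leaf, w would have two neighbours of colour i and two
  of colour l.\<close>

lemma no_two_kempe_paths:
  assumes c: "colouring c" and ijl: "i < d" "j < d" "l < d" "i \<noteq> j" "j \<noteq> l" "i \<noteq> l"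
    and w: "w \<in> punctured" "c w = j" "w \<noteq> nbr_of_colour c j"
    and paths: "(kempe_edge c i j)\<^sup>*\<^sup>* w (nbr_of_colour c j)" "(kempe_edge c l j)\<^sup>*\<^sup>* w (nbr_of_colour c j)"
  shows False
proof -
  let ?y = "nbr_of_colour c j"
  have y: "?y \<in> nbrs R v" "c ?y = j" "?y \<in> punctured" using nbr_of_colour[OF c ijl(2)] nbrs_v_subset by auto
  have two: "2 \<le> colour_degree c w m" if m: "m < d" "m \<noteq> j" and path: "(kempe_edge c m j)\<^sup>*\<^sup>* w ?y" for m
  proof (rule ccontr)
    assume "\<not> 2 \<le> colour_degree c w m"
    hence "colour_degree c w m = 1" using colour_degree_pos[OF c w(1) m(1)] m(2) w(2) by simp
    moreover have "colour_degree c ?y m = 1" using colour_degree_nbr_v[OF c y(1) m(1)] m(2) y(2) by simp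
    moreover have "w \<in> kempe_chain c m j ?y" using kempe_path_sym[OF path] by (simp add: kempe_chain_def)
    ultimately show False
      using kempe_chain_unique_leaf[OF c m(1) ijl(2) m(2) y(3), of w ?y] y(2) w(2,3) kempe_chain_self
      by auto
  qed
  show False
    using colour_degree_not_both_2[OF c w(1) ijl(1) _ ijl(3)] two[OF ijl(1) ijl(4) paths(1)]
      two[OF ijl(3) ijl(5)[symmetric] paths(2)] ijl(4-6) w(2) by auto
qed

text \<open>Along an (i, j)-path avoiding the i-coloured neighbour x of v, no i-coloured vertex lies
  on the (i, l)-chain of x (it would be joined to x by two Kempe paths), so swapping i and l on
  that chain leaves the path intact.\<close>

lemma swap_keeps_kempe_path:
  assumes c: "colouring c" and ijl: "i < d" "j < d" "l < d" "i \<noteq> j" "j \<noteq> l" "i \<noteq> l"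
    and x: "x = nbr_of_colour c i" and u: "(kempe_edge c i j)\<^sup>*\<^sup>* x u"
    and path: "(\<lambda>a b. kempe_edge c i j a b \<and> a \<noteq> x \<and> b \<noteq> x)\<^sup>*\<^sup>* u z"
  shows "(kempe_edge (swap_colours c i l (kempe_chain c i l x)) i j)\<^sup>*\<^sup>* u z
    \<and> (kempe_edge c i j)\<^sup>*\<^sup>* x z"
  using path
proof (induction rule: rtranclp_induct)
  case (step a b)
  let ?c' = "swap_colours c i l (kempe_chain c i l x)"
  have x': "x \<in> punctured" "c x = i" using nbr_of_colour[OF c ijl(1)] nbrs_v_subset x by auto
  have unchanged: "?c' y = c y" if "(kempe_edge c i j)\<^sup>*\<^sup>* x y" "y \<noteq> x" for y
  proof -
    have y: "y \<in> punctured" "c y \<in> {i, j}" using kempe_chain_mem[of x c i j y] x' that(1)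
      by (auto simp: kempe_chain_def)
    have "y \<notin> kempe_chain c i l x" if "c y = i"
    proof
      assume "y \<in> kempe_chain c i l x"
      hence "(kempe_edge c l i)\<^sup>*\<^sup>* y x"
        using kempe_path_sym kempe_edge_commute unfolding kempe_chain_def by fastforce
      moreover have "(kempe_edge c j i)\<^sup>*\<^sup>* y x"
        using \<open>(kempe_edge c i j)\<^sup>*\<^sup>* x y\<close> kempe_path_sym kempe_edge_commute by metis
      ultimately show False
        using no_two_kempe_paths[OF c ijl(2,1,3) _ _ ijl(5) y(1) that] ijl \<open>y \<noteq> x\<close> x by auto
    qed
    thus ?thesis using y(2) ijl by (auto simp: swap_colours_def)
  qed
  have ab: "kempe_edge c i j a b" "a \<noteq> x" "b \<noteq> x" using step.hyps(2) by auto
  have xb: "(kempe_edge c i j)\<^sup>*\<^sup>* x b" using step.IH ab(1) by (auto intro: rtranclp.rtrancl_into_rtrancl)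
  have "kempe_edge ?c' i j a b"
    using ab(1) unchanged[OF _ ab(2)] unchanged[OF xb ab(3)] step.IH by (simp add: kempe_edge_def)
  thus ?case using step.IH xb by (auto intro: rtranclp.rtrancl_into_rtrancl)
qed (use u in simp)

lemma unique_nbr_of_colour:
  assumes c: "colouring c" and x: "x \<in> nbrs R v" and j: "j < d" "j \<noteq> c x"
  obtains u where "u \<in> punctured" "R x u" "c u = j" "\<And>w. kempe_edge c (c x) j x w \<Longrightarrow> w = u"
proof -
  have "colour_degree c x j = 1" using colour_degree_nbr_v[OF c x j] .
  then obtain u where u_set: "{w\<in>punctured. R x w \<and> c w = j} = {u}"
    unfolding colour_degree_def by (rule card_1_singletonE)
  have x': "x \<in> punctured" using x nbrs_v_subset by auto
  have "w = u" if "kempe_edge c (c x) j x w" for w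
  proof -
    have "c w \<noteq> c x" using that colouring_adjacent[OF c x'] unfolding kempe_edge_def by metis
    thus ?thesis using that u_set by (auto simp: kempe_edge_def)
  qed
  moreover have "u \<in> punctured" "R x u" "c u = j" using u_set by blast+
  ultimately show ?thesis using that by blast
qed

text \<open>Suppose two neighbours x and y of v are not adjacent; let i, j be their colours and u the
  unique neighbour of x of colour j.  After swapping i with a third colour l on the
  (i, l)-chain of x, the vertex u is joined to y both by an (l, j)-path through x and by the
  tail of the old (i, j)-path from x to y.\<close>

lemma nbrs_v_adjacent:
  assumes x: "x \<in> nbrs R v" and y: "y \<in> nbrs R v" and "x \<noteq> y"
  shows "R x y"
proof (rule ccontr)
  assume not_adj: "\<not> R x y"
  obtain c where "\<forall>z\<in>C - {v}. c z < d" "proper_colouring R (C - {v}) c"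
    using colouring_minus_vertex[OF v_in_C] by blast
  hence c: "colouring c" by (simp add: colouring_def punctured_def)
  have xy: "x \<in> punctured" "y \<in> punctured" using x y nbrs_v_subset by auto
  define i where "i = c x"
  define j where "j = c y"
  have "i \<noteq> j" using inj_onD[OF nbrs_v_rainbow[OF c] _ x y] \<open>x \<noteq> y\<close> by (auto simp: i_def j_def)
  hence ij: "i < d" "j < d" "i \<noteq> j" using colouring_less[OF c] xy by (auto simp: i_def j_def)
  have x_nbr: "nbr_of_colour c i = x" and y_nbr: "nbr_of_colour c j = y"
    unfolding i_def j_def using nbr_of_colour_eq[OF c] x y by auto
  obtain u where u: "u \<in> punctured" "R x u" "c u = j" and u_unique: "\<And>w. kempe_edge c i j x w \<Longrightarrow> w = u"
    using unique_nbr_of_colour[OF c x ij(2)] ij(3) unfolding i_def by blast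
  have "\<exists>l::nat. l < 3 \<and> l \<noteq> i \<and> l \<noteq> j" by presburger
  then obtain l where "l < 3" "l \<noteq> i" "l \<noteq> j" by blast
  hence l: "l < d" "l \<noteq> i" "l \<noteq> j" using three_le_d by auto
  define c' where "c' = swap_colours c i l (kempe_chain c i l x)"
  have c': "colouring c'"
    unfolding c'_def using colouring_swap_colours[OF c xy(1) _ ij(1) l(1)] by (simp add: i_def)
  have c'_vals: "c' x = l" "c' y = j" "c' u = j"
    using kempe_chain_self[of x c i l] ij l u(3) by (auto simp: c'_def swap_colours_def i_def j_def)
  have c'_nbr: "nbr_of_colour c' j = y" using nbr_of_colour_eq[OF c' y] c'_vals by simp
  have "(kempe_edge c' l j)\<^sup>*\<^sup>* (nbr_of_colour c' l) (nbr_of_colour c' j)"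
    using kempe_path_between_nbrs[OF c' l(1) ij(2) l(3)] .
  moreover have "kempe_edge c' l j u x" using u xy c'_vals sym by (auto simp: kempe_edge_def)
  ultimately have path_lj: "(kempe_edge c' l j)\<^sup>*\<^sup>* u y"
    using nbr_of_colour_eq[OF c' x] c'_vals c'_nbr by (auto intro: converse_rtranclp_into_rtranclp)
  have "(kempe_edge c i j)\<^sup>*\<^sup>* x y" using kempe_path_between_nbrs[OF c ij] x_nbr y_nbr by simp
  hence "(\<lambda>a b. kempe_edge c i j a b \<and> a \<noteq> x \<and> b \<noteq> x)\<^sup>*\<^sup>* u y"
    using rtranclp_avoiding_start[OF _ _ u_unique] \<open>x \<noteq> y\<close> by blast
  moreover have "(kempe_edge c i j)\<^sup>*\<^sup>* x u" using xy u by (auto simp: kempe_edge_def i_def)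
  ultimately have path_ij: "(kempe_edge c' i j)\<^sup>*\<^sup>* u y"
    using swap_keeps_kempe_path[OF c ij(1,2) l(1) ij(3) l(3)[symmetric] l(2)[symmetric] x_nbr[symmetric]]
    unfolding c'_def by blast
  show False
    using no_two_kempe_paths[OF c' ij(1,2) l(1) ij(3) l(3)[symmetric] l(2)[symmetric] u(1) c'_vals(3)]
      u(2) not_adj c'_nbr path_lj path_ij by (auto simp: kempe_edge_commute)
qed

end

context bounded_degree_component
begin

lemma complete_if_nbrs_adjacent:
  assumes reg: "\<And>x. x \<in> C \<Longrightarrow> card (nbrs R x) = d" and v: "v \<in> C"
    and nbrs_adj: "\<And>x y. x \<in> nbrs R v \<Longrightarrow> y \<in> nbrs R v \<Longrightarrow> x \<noteq> y \<Longrightarrow> R x y"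
  shows "card C = d + 1 \<and> (\<forall>a\<in>C. \<forall>b\<in>C. a \<noteq> b \<longrightarrow> R a b)"
proof -
  let ?N = "nbrs R v"
  have N: "?N \<subseteq> C" "v \<notin> ?N" "finite ?N"
    using nbrs_closed[OF v] irrefl[of v] finite_nbrs[OF v] by (auto simp: nbrs_def)
  have nbrs_a: "nbrs R a = insert v (?N - {a})" if a: "a \<in> ?N" for a
  proof (rule card_subset_eq[symmetric])
    have aC: "a \<in> C" using a N(1) by blast
    show "finite (nbrs R a)" using finite_nbrs[OF aC] .
    have "R a v" using a sym by (simp add: nbrs_def)
    thus "insert v (?N - {a}) \<subseteq> nbrs R a" using a nbrs_adj unfolding nbrs_def by blast
    have "0 < d" using a N(3) reg[OF v] card_gt_0_iff by force
    hence "card (insert v (?N - {a})) = d" using N(2,3) a reg[OF v] by (simp add: card_insert_disjoint)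
    thus "card (insert v (?N - {a})) = card (nbrs R a)" using reg[OF aC] by simp
  qed
  have "b \<in> insert v ?N" if "R\<^sup>*\<^sup>* v b" for b
    using that
  proof (induction rule: rtranclp_induct)
    case (step y z)
    thus ?case using nbrs_a[of y] by (cases "y = v") (auto simp: nbrs_def)
  qed simp
  hence C_eq: "C = insert v ?N" using connected[OF v] N(1) v by blast
  have "card C = d + 1" unfolding C_eq using N reg[OF v] by simp
  moreover have "R a b" if "a \<in> C" "b \<in> C" "a \<noteq> b" for a b
    using that nbrs_adj[of a b] sym[of v a] sym[of v b] unfolding C_eq nbrs_def by blast
  ultimately show ?thesis by blast
qed

text \<open>If there is no large independent set, the bound of independent_set_minus_one is
  attained exactly, which is the situation of the locale critical_component.\<close>

lemma independent_set_or_complete_regular: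
  assumes d: "3 \<le> d" and reg: "\<And>x. x \<in> C \<Longrightarrow> card (nbrs R x) = d" and "C \<noteq> {}"
  shows "(\<exists>I\<subseteq>C. independent R I \<and> card C \<le> d * card I)
    \<or> (card C = d + 1 \<and> (\<forall>a\<in>C. \<forall>b\<in>C. a \<noteq> b \<longrightarrow> R a b))"
proof (cases "\<exists>I\<subseteq>C. independent R I \<and> card C \<le> d * card I")
  case no_large: False
  obtain v where v: "v \<in> C" using \<open>C \<noteq> {}\<close> by blast
  obtain I0 where I0: "I0 \<subseteq> C" "independent R I0" "card C \<le> d * card I0 + 1"
    using independent_set_minus_one[OF v] d by auto
  have card_C: "card C = d * card I0 + 1" using no_large I0 by force
  have "card I \<le> card I0" if "I \<subseteq> C" "independent R I" for I
  proof (rule ccontr)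
    assume "\<not> card I \<le> card I0"
    hence "card C \<le> d * card I" using card_C d by (simp add: Suc_le_eq mult_le_mono2 not_le)
    thus False using no_large that by blast
  qed
  hence "critical_component R C d v (card I0)"
    by (intro critical_component.intro bounded_degree_component_axioms critical_component_axioms.intro
        d reg v card_C)
  from complete_if_nbrs_adjacent[OF reg v critical_component.nbrs_v_adjacent[OF this]]
  show ?thesis ..
qed blast

lemma independent_set_or_complete:
  assumes "3 \<le> d" and "C \<noteq> {}"
  shows "(\<exists>I\<subseteq>C. independent R I \<and> card C \<le> d * card I)
    \<or> (card C = d + 1 \<and> (\<forall>a\<in>C. \<forall>b\<in>C. a \<noteq> b \<longrightarrow> R a b))"
proof (cases "\<exists>r\<in>C. card (nbrs R r) < d")
  case True
  thus ?thesis using independent_set_if_low_degree_vertex by blast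
next
  case False
  hence "\<And>x. x \<in> C \<Longrightarrow> card (nbrs R x) = d" using degree_le by (meson le_neq_implies_less)
  thus ?thesis using independent_set_or_complete_regular assms by blast
qed

end

section \<open>The common-neighbour graph of a cubic graph\<close>

lemma even_card_involution:
  assumes "finite A" and "\<And>x. x \<in> A \<Longrightarrow> f x \<in> A \<and> f x \<noteq> x \<and> f (f x) = x"
  shows "even (card A)"
  using assms
proof (induction A rule: finite_psubset_induct)
  case (psubset A)
  show ?case
  proof (cases "A = {}")
    case False
    then obtain x where x: "x \<in> A" by blast
    let ?B = "A - {x, f x}"
    have "f y \<in> ?B \<and> f y \<noteq> y \<and> f (f y) = y" if "y \<in> ?B" for y
      using that psubset.prems[of y] psubset.prems[OF x] by auto
    hence "even (card ?B)" using x by (intro psubset.IH) auto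
    moreover have "card A = card ?B + 2"
    proof -
      have "card {x, f x} = 2" "{x, f x} \<subseteq> A" using psubset.prems[OF x] x by auto
      thus ?thesis using psubset.hyps card_mono[of A "{x, f x}"] by (simp add: card_Diff_subset)
    qed
    ultimately show ?thesis by simp
  qed simp
qed

text \<open>The open packings of G are exactly the independent sets of common_nbr V E.\<close>

definition common_nbr :: "'a set \<Rightarrow> ('a \<Rightarrow> 'a \<Rightarrow> bool) \<Rightarrow> 'a \<Rightarrow> 'a \<Rightarrow> bool" where
  "common_nbr V E x y \<longleftrightarrow> x \<in> V \<and> y \<in> V \<and> x \<noteq> y \<and> (\<exists>m. E x m \<and> E y m)"

locale cubic_graph =
  fixes V :: "'a set" and E :: "'a \<Rightarrow> 'a \<Rightarrow> bool"
  assumes simple: "simple_graph V E" and cubic: "cubic V E"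
begin

abbreviation H :: "'a \<Rightarrow> 'a \<Rightarrow> bool" where
  "H \<equiv> common_nbr V E"

lemma finite_V: "finite V"
  using simple by (simp add: simple_graph_def)

lemma edge_in_V: "E x y \<Longrightarrow> x \<in> V \<and> y \<in> V"
  using simple by (simp add: simple_graph_def)

lemma edge_sym: "E x y \<Longrightarrow> E y x"
  using simple by (simp add: simple_graph_def)

lemma edge_irrefl: "\<not> E x x"
  using simple by (simp add: simple_graph_def)

lemma card_nbhd: "x \<in> V \<Longrightarrow> card (nbhd V E x) = 3"
  using cubic by (simp add: cubic_def)

lemma finite_nbhd: "finite (nbhd V E x)"
  using finite_V by (simp add: nbhd_def)

lemma mem_nbhd_iff: "y \<in> nbhd V E x \<longleftrightarrow> E x y"
  using edge_in_V by (auto simp: nbhd_def)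

lemma card_nbhd_minus: "E x m \<Longrightarrow> card (nbhd V E m - {x}) = 2"
  using card_nbhd[of m] edge_in_V[of x m] edge_sym mem_nbhd_iff finite_nbhd by simp

lemma common_nbr_sym: "H x y \<Longrightarrow> H y x"
  by (auto simp: common_nbr_def)

lemma nbrs_common_nbr: "nbrs H x = (\<Union>m\<in>nbhd V E x. nbhd V E m - {x}) \<inter> V"
  using edge_sym by (auto simp: nbrs_def common_nbr_def mem_nbhd_iff dest: edge_in_V)

lemma card_nbrs_common_nbr: "x \<in> V \<Longrightarrow> card (nbrs H x) \<le> 6"
proof -
  assume x: "x \<in> V"
  have "card (nbrs H x) \<le> card (\<Union>m\<in>nbhd V E x. nbhd V E m - {x})"
    unfolding nbrs_common_nbr using finite_nbhd by (intro card_mono) auto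
  also have "\<dots> \<le> (\<Sum>m\<in>nbhd V E x. card (nbhd V E m - {x}))"
    using finite_nbhd by (rule card_UN_le)
  also have "\<dots> = 6" using card_nbhd_minus card_nbhd[OF x] by (simp add: mem_nbhd_iff)
  finally show ?thesis .
qed

definition component :: "'a \<Rightarrow> 'a set" where
  "component r = {y. H\<^sup>*\<^sup>* r y}"

lemma component_subset: "r \<in> V \<Longrightarrow> component r \<subseteq> V"
proof
  fix y assume "r \<in> V" "y \<in> component r"
  hence "H\<^sup>*\<^sup>* r y" "r \<in> V" by (simp_all add: component_def)
  thus "y \<in> V" by (induction rule: rtranclp_induct) (auto simp: common_nbr_def)
qed

lemma common_nbr_path_sym: "H\<^sup>*\<^sup>* a b \<Longrightarrow> H\<^sup>*\<^sup>* b a"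
  by (rule symp_rtranclp[THEN sympD]) (auto simp: symp_def common_nbr_def)

lemma component_eq: "b \<in> component a \<Longrightarrow> component b = component a"
  using common_nbr_path_sym unfolding component_def by (auto intro: rtranclp_trans)

lemma bounded_degree_component: "r \<in> V \<Longrightarrow> bounded_degree_component H (component r) 6"
proof
  assume r: "r \<in> V"
  show "finite (component r)" using component_subset[OF r] finite_V finite_subset by blast
  show "nbrs H x \<subseteq> component r" if "x \<in> component r" for x
    using that by (auto simp: nbrs_def component_def intro: rtranclp.rtrancl_into_rtrancl)
  show "card (nbrs H x) \<le> 6" if "x \<in> component r" for x
    using that component_subset[OF r] card_nbrs_common_nbr by blast
  show "H\<^sup>*\<^sup>* a b" if "a \<in> component r" "b \<in> component r" for a b
    using that common_nbr_path_sym unfolding component_def by (blast intro: rtranclp_trans)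
qed (auto simp: common_nbr_def)

text \<open>A walk of length two is an H-step, so an edge a b maps the H-component of a into
  that of b.\<close>

lemma edge_maps_component:
  assumes "E a b" "y \<in> component a" "E y z"
  shows "z \<in> component b"
proof -
  have "H\<^sup>*\<^sup>* a y" using assms(2) by (simp add: component_def)
  thus ?thesis using assms(3)
  proof (induction arbitrary: z rule: rtranclp_induct)
    case base
    have "z = b \<or> H b z" using assms(1) base edge_sym edge_in_V by (auto simp: common_nbr_def)
    thus ?case by (auto simp: component_def)
  next
    case (step w y)
    obtain t where t: "E w t" "E y t" using step.hyps(2) by (auto simp: common_nbr_def)
    have "t \<in> component b" using step.IH[OF t(1)] .
    moreover have "z = t \<or> H t z" using t(2) step.prems edge_sym edge_in_V by (auto simp: common_nbr_def)
    ultimately show ?case by (auto simp: component_def intro: rtranclp.rtrancl_into_rtrancl)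
  qed
qed

lemma even_card_V: "even (card V)"
proof -
  let ?D = "Sigma V (nbhd V E)"
  have "card ?D = 3 * card V" using finite_V finite_nbhd card_nbhd by (simp add: card_SigmaI)
  moreover have "even (card ?D)"
  proof (rule even_card_involution[where f = prod.swap])
    show "finite ?D" using finite_V finite_nbhd by blast
    fix e assume "e \<in> ?D"
    then obtain u w where "e = (u, w)" "E u w" by (auto simp: mem_nbhd_iff)
    thus "prod.swap e \<in> ?D \<and> prod.swap e \<noteq> e \<and> prod.swap (prod.swap e) = e"
      using edge_sym[of u w] edge_in_V[of u w] edge_irrefl[of u] by (auto simp: mem_nbhd_iff)
  qed
  ultimately show ?thesis by simp
qed

end

section \<open>Recognising the Heawood graph\<close>

lemma graph_iso_by_inverse:
  assumes g: "bij_betw g W V" and edges: "\<And>m n. m \<in> W \<Longrightarrow> n \<in> W \<Longrightarrow> E (g m) (g n) \<longleftrightarrow> F m n"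
  shows "graph_iso V E W F"
proof -
  let ?h = "the_inv_into W g"
  have "bij_betw ?h V W" using g by (rule bij_betw_the_inv_into)
  moreover have "E x y \<longleftrightarrow> F (?h x) (?h y)" if "x \<in> V" "y \<in> V" for x y
    using edges[of "?h x" "?h y"] that f_the_inv_into_f_bij_betw[OF g] \<open>bij_betw ?h V W\<close>
    by (metis bij_betwE)
  ultimately show ?thesis unfolding graph_iso_def by blast
qed

lemma lessThan_14_split: "{0..<14} = {..<7} \<union> (\<lambda>b. b + 7) ` {..<7::nat}"
proof -
  have "x \<in> (\<lambda>b. b + 7) ` {..<7}" if "7 \<le> x" "x < 14" for x :: nat
    using that by (intro image_eqI[of x _ "x - 7"]) auto
  thus ?thesis by auto (meson not_less)
qed

lemma less_7_cases: "(n::nat) < 7 \<longleftrightarrow> n = 0 \<or> n = 1 \<or> n = 2 \<or> n = 3 \<or> n = 4 \<or> n = 5 \<or> n = 6"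
  by auto

lemma heawood_inc_iff:
  "a < 7 \<Longrightarrow> b < 7 \<Longrightarrow> heawood_inc a b \<longleftrightarrow> a \<in> {b, (b + 1) mod 7, (b + 3) mod 7}"
  by (auto simp: heawood_inc_def)

lemma heawood_line_determined:
  "b < 7 \<Longrightarrow> b' < 7 \<Longrightarrow> heawood_inc b b' \<Longrightarrow> heawood_inc b' b \<Longrightarrow> b = b'"
  unfolding less_7_cases by (elim disjE) (simp_all add: heawood_inc_def)

lemma heawood_points_on_line:
  assumes "a < 7" "a' < 7" "a \<noteq> a'"
  shows "\<exists>b<7. heawood_inc a b \<and> heawood_inc a' b"
proof -
  have "\<exists>b<7. Q b" if "Q 0 \<or> Q 1 \<or> Q 2 \<or> Q 3 \<or> Q 4 \<or> Q 5 \<or> Q (6::nat)" for Q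
    using that by (auto simp: less_7_cases)
  thus ?thesis using assms unfolding less_7_cases by (elim disjE) (simp_all add: heawood_inc_def)
qed

text \<open>Two points (vertices of P) have a common neighbour, a line (vertex of L), and by
  cubicity every line carries three points: P and L are the points and lines of a Fano
  plane.\<close>

locale point_line_graph = cubic_graph +
  fixes P L :: "'a set"
  assumes V_eq: "V = P \<union> L" and disjoint: "P \<inter> L = {}"
    and bipartite: "\<And>a b. E a b \<Longrightarrow> a \<in> P \<longleftrightarrow> b \<in> L"
    and card_P: "card P = 7"
    and P_clique: "\<And>a b. a \<in> P \<Longrightarrow> b \<in> P \<Longrightarrow> a \<noteq> b \<Longrightarrow> H a b"
begin

lemma finite_P: "finite P"
  using V_eq finite_V finite_subset by blast

lemma edge_P_L: "E x y \<Longrightarrow> x \<in> P \<Longrightarrow> y \<in> L"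
  using bipartite by blast

lemma edge_L_P: "E x y \<Longrightarrow> x \<in> L \<Longrightarrow> y \<in> P"
  using bipartite[of x y] edge_in_V[of x y] disjoint V_eq by blast

text \<open>The six other points are H-neighbours of p, while two lines through p and q would
  leave room for at most five.\<close>

lemma unique_line:
  assumes pq: "p \<in> P" "q \<in> P" "p \<noteq> q" and l: "E p l1" "E q l1" "E p l2" "E q l2"
  shows "l1 = l2"
proof (rule ccontr)
  assume "l1 \<noteq> l2"
  have sub: "{l1, l2} \<subseteq> nbhd V E p" using l(1,3) by (simp add: mem_nbhd_iff)
  have "card (nbhd V E p) = 3" using card_nbhd edge_in_V[OF l(1)] by blast
  hence "card (nbhd V E p - {l1, l2}) = 1" using card_Diff_subset[OF _ sub] \<open>l1 \<noteq> l2\<close> by simp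
  then obtain l3 where "nbhd V E p - {l1, l2} = {l3}" by (rule card_1_singletonE)
  hence nbhd_p: "nbhd V E p = {l1, l2, l3}" using sub by blast
  define A where "A l = nbhd V E l - {p}" for l
  have finA: "finite (A l)" for l using finite_nbhd by (simp add: A_def)
  have "E p l3" using nbhd_p mem_nbhd_iff by blast
  hence cardA: "card (A l1) = 2" "card (A l2) = 2" "card (A l3) = 2"
    using card_nbhd_minus l(1,3) unfolding A_def by blast+
  have "q \<in> A l1 \<inter> A l2" using l pq edge_sym[of q] by (auto simp: A_def mem_nbhd_iff)
  hence "1 \<le> card (A l1 \<inter> A l2)" using finA by (metis Suc_leI card_gt_0_iff empty_iff finite_Int One_nat_def)
  hence "card (A l1 \<union> A l2) \<le> 3" using card_Un_Int[OF finA finA, of l1 l2] cardA by linarith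
  have "P - {p} \<subseteq> nbrs H p" using P_clique pq(1) by (auto simp: nbrs_def)
  also have "\<dots> \<subseteq> (A l1 \<union> A l2) \<union> A l3" unfolding nbrs_common_nbr nbhd_p A_def by auto
  finally have "card (P - {p}) \<le> card ((A l1 \<union> A l2) \<union> A l3)" using finA by (intro card_mono) auto
  also have "\<dots> \<le> card (A l1 \<union> A l2) + card (A l3)" by (rule card_Un_le)
  finally show False using \<open>card (A l1 \<union> A l2) \<le> 3\<close> cardA card_P pq(1) finite_P by simp
qed

definition collinear :: "'a \<Rightarrow> 'a \<Rightarrow> 'a \<Rightarrow> bool" where
  "collinear p q r \<longleftrightarrow>
     p \<in> P \<and> q \<in> P \<and> r \<in> P \<and> p \<noteq> q \<and> p \<noteq> r \<and> q \<noteq> r \<and> (\<exists>l. E p l \<and> E q l \<and> E r l)"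

lemma nbhd_line:
  assumes "collinear p q r" "E p l" "E q l" "E r l"
  shows "nbhd V E l = {p, q, r}"
proof (rule card_subset_eq[OF finite_nbhd, symmetric])
  show "{p, q, r} \<subseteq> nbhd V E l" using assms(2-4) edge_sym by (blast intro: mem_nbhd_iff[THEN iffD2])
  show "card {p, q, r} = card (nbhd V E l)"
    using assms card_nbhd[of l] edge_in_V[of p l] by (auto simp: collinear_def)
qed

lemma same_line:
  assumes "collinear a b c" "collinear a' b' c'" "x \<noteq> y"
    and "x \<in> {a, b, c}" "y \<in> {a, b, c}" "x \<in> {a', b', c'}" "y \<in> {a', b', c'}"
  shows "{a, b, c} = {a', b', c'}"
proof -
  obtain l l' where l: "E a l" "E b l" "E c l" and l': "E a' l'" "E b' l'" "E c' l'"
    using assms(1,2) unfolding collinear_def by blast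
  have "x \<in> P" "y \<in> P" "E x l" "E y l" "E x l'" "E y l'"
    using assms l l' unfolding collinear_def by auto
  hence "l = l'" using unique_line assms(3) by blast
  thus ?thesis using nbhd_line[OF assms(1) l] nbhd_line[OF assms(2) l'] by simp
qed

lemma third_point_exists:
  assumes "p \<in> P" "q \<in> P" "p \<noteq> q"
  shows "\<exists>r. collinear p q r"
proof -
  obtain m where m: "E p m" "E q m" using P_clique[OF assms] by (auto simp: common_nbr_def)
  have pq: "{p, q} \<subseteq> nbhd V E m" using edge_sym[OF m(1)] edge_sym[OF m(2)] by (simp add: mem_nbhd_iff)
  have "card (nbhd V E m) = 3" using card_nbhd edge_in_V[OF m(1)] by blast
  hence "card (nbhd V E m - {p, q}) = 1"
    using card_Diff_subset[OF _ pq] assms(3) by simp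
  then obtain r where "nbhd V E m - {p, q} = {r}" by (rule card_1_singletonE)
  hence "r \<in> nbhd V E m - {p, q}" by blast
  hence "E m r" "r \<noteq> p" "r \<noteq> q" by (simp_all add: mem_nbhd_iff)
  hence "collinear p q r"
    using assms m edge_sym[of m r] edge_L_P[of m r] edge_P_L[OF m(1)] unfolding collinear_def by blast
  thus ?thesis ..
qed

lemma collinear_perms:
  "collinear p q r \<Longrightarrow> collinear q p r \<and> collinear p r q \<and> collinear r p q \<and> collinear q r p \<and> collinear r q p"
  unfolding collinear_def by blast

lemma collinear_distinct: "collinear p q r \<Longrightarrow> p \<noteq> q \<and> p \<noteq> r \<and> q \<noteq> r"
  unfolding collinear_def by blast

lemma collinear_in_P: "collinear p q r \<Longrightarrow> p \<in> P \<and> q \<in> P \<and> r \<in> P"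
  unfolding collinear_def by blast

lemma third_point_unique: "collinear p q r \<Longrightarrow> collinear p q s \<Longrightarrow> r = s"
  using same_line[of p q r p q s p q] collinear_distinct[of p q r] collinear_distinct[of p q s] by auto

lemma four_lines:
  "\<exists>p0 p1 p2 p3 p4 p5 p6. distinct [p0, p1, p2, p3, p4, p5, p6] \<and> P = {p0, p1, p2, p3, p4, p5, p6} \<and>
     collinear p0 p1 p3 \<and> collinear p1 p2 p4 \<and> collinear p2 p3 p5 \<and> collinear p3 p4 p6"
proof -
  have "P \<noteq> {}" using card_P by auto
  then obtain p0 where p0: "p0 \<in> P" by auto
  have "card (P - {p0}) = 6" using card_P p0 finite_P by simp
  hence "P - {p0} \<noteq> {}" by (metis card.empty zero_neq_numeral)
  then obtain p1 where p1: "p1 \<in> P" "p1 \<noteq> p0" by auto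
  obtain p3 where c013: "collinear p0 p1 p3" using third_point_exists[OF p0 p1(1)] p1(2) by auto
  have sub3: "{p0, p1, p3} \<subseteq> P" using p0 p1 collinear_in_P[OF c013] by auto
  have "card {p0, p1, p3} = 3" using collinear_distinct[OF c013] by simp
  hence "card (P - {p0, p1, p3}) \<ge> 4" using card_P card_Diff_subset[OF _ sub3] by simp
  hence "P - {p0, p1, p3} \<noteq> {}" by (metis card.empty not_numeral_le_zero)
  then obtain p2 where p2: "p2 \<in> P" "p2 \<noteq> p0" "p2 \<noteq> p1" "p2 \<noteq> p3" by auto
  have n012: "\<not> collinear p0 p1 p2" using third_point_unique[OF c013] p2(4) by blast
  obtain p4 where c124: "collinear p1 p2 p4" using third_point_exists[OF p1(1) p2(1)] p2(3) by auto
  obtain p5 where c235: "collinear p2 p3 p5" using third_point_exists[OF p2(1), of p3] p2(4) collinear_in_P[OF c013] by auto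
  have p34: "p3 \<noteq> p4"
  proof
    assume "p3 = p4"
    hence "collinear p1 p3 p2" using collinear_perms[OF c124] by simp
    moreover have "collinear p1 p3 p0" using collinear_perms[OF c013] by simp
    ultimately show False using third_point_unique p2(2) by blast
  qed
  obtain p6 where c346: "collinear p3 p4 p6" using third_point_exists[of p3 p4] p34 collinear_in_P[OF c013] collinear_in_P[OF c124] by auto
  note cs = collinear_perms[OF c013] collinear_perms[OF c124] collinear_perms[OF c235] collinear_perms[OF c346] c013 c124 c235 c346
  have d1: "p4 \<noteq> p0" using cs n012 third_point_unique collinear_perms by metis
  have d2: "p4 \<noteq> p3" using p34 by simp
  have d3: "p5 \<noteq> p0" using cs p2 third_point_unique by metis
  have d4: "p5 \<noteq> p1" using cs p2 third_point_unique by metis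
  have d5: "p5 \<noteq> p4" using cs p2 third_point_unique collinear_distinct by metis
  have d6: "p6 \<noteq> p0" using cs p2 d1 third_point_unique collinear_distinct by metis
  have d7: "p6 \<noteq> p1" using cs p2 third_point_unique collinear_distinct by metis
  have d8: "p6 \<noteq> p2" using cs p2 third_point_unique collinear_distinct by metis
  have d9: "p6 \<noteq> p5" using cs p2 d5 third_point_unique collinear_distinct by metis
  have dist: "distinct [p0, p1, p2, p3, p4, p5, p6]"
    using d1 d2 d3 d4 d5 d6 d7 d8 d9 p1 p2 collinear_distinct[OF c013] collinear_distinct[OF c124] collinear_distinct[OF c235] collinear_distinct[OF c346]
    by auto
  have sub: "{p0, p1, p2, p3, p4, p5, p6} \<subseteq> P" using collinear_in_P c013 c124 c235 c346 by auto
  have "card {p0, p1, p2, p3, p4, p5, p6} = 7" using distinct_card[OF dist] by (simp only: set_simps) simp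
  hence Peq: "P = {p0, p1, p2, p3, p4, p5, p6}" using card_subset_eq[OF finite_P sub] card_P by simp
  thus ?thesis using dist c013 c124 c235 c346 by blast
qed

lemma closing_lines:
  assumes dist: "distinct [p0, p1, p2, p3, p4, p5, p6]" and Peq: "P = {p0, p1, p2, p3, p4, p5, p6}"
    and c013: "collinear p0 p1 p3" and c124: "collinear p1 p2 p4"
    and c235: "collinear p2 p3 p5" and c346: "collinear p3 p4 p6"
  shows "collinear p4 p5 p0 \<and> collinear p5 p6 p1 \<and> collinear p6 p0 p2"
proof -
  have inP: "\<And>r. r \<in> P \<Longrightarrow> r = p0 \<or> r = p1 \<or> r = p2 \<or> r = p3 \<or> r = p4 \<or> r = p5 \<or> r = p6"
    unfolding Peq by auto
  have dd: "p0 \<noteq> p1" "p0 \<noteq> p2" "p0 \<noteq> p3" "p0 \<noteq> p4" "p0 \<noteq> p5" "p0 \<noteq> p6"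
    "p1 \<noteq> p2" "p1 \<noteq> p3" "p1 \<noteq> p4" "p1 \<noteq> p5" "p1 \<noteq> p6" "p2 \<noteq> p3" "p2 \<noteq> p4"
    "p2 \<noteq> p5" "p2 \<noteq> p6" "p3 \<noteq> p4" "p3 \<noteq> p5" "p3 \<noteq> p6" "p4 \<noteq> p5" "p4 \<noteq> p6" "p5 \<noteq> p6"
    using dist by auto
  have sub: "{p0, p1, p2, p3, p4, p5, p6} \<subseteq> P" using Peq by simp
  obtain r1 where r1: "collinear p4 p5 r1" using third_point_exists[of p4 p5] dd sub by auto
  have c450: "collinear p4 p5 p0"
  proof -
    have "r1 \<in> P" using collinear_in_P[OF r1] by simp
    moreover have "r1 \<noteq> p4" "r1 \<noteq> p5" using collinear_distinct[OF r1] by auto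
    moreover have "r1 \<noteq> p1" using third_point_unique[of p1 p4 p5 p2] collinear_perms[OF r1] collinear_perms[OF c124] dd c013 c124 c235 c346 by auto
    moreover have "r1 \<noteq> p2" using third_point_unique[of p2 p5 p4 p3] collinear_perms[OF r1] collinear_perms[OF c235] dd c013 c124 c235 c346 by auto
    moreover have "r1 \<noteq> p3" using third_point_unique[of p3 p4 p5 p6] collinear_perms[OF r1] collinear_perms[OF c346] dd c013 c124 c235 c346 by auto
    moreover have "r1 \<noteq> p6" using third_point_unique[of p4 p6 p5 p3] collinear_perms[OF r1] collinear_perms[OF c346] dd c013 c124 c235 c346 by auto
    ultimately have "r1 = p0" using inP by blast
    thus ?thesis using r1 by simp
  qed
  obtain r2 where r2: "collinear p5 p6 r2" using third_point_exists[of p5 p6] dd sub by auto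
  have c561: "collinear p5 p6 p1"
  proof -
    have "r2 \<in> P" using collinear_in_P[OF r2] by simp
    moreover have "r2 \<noteq> p5" "r2 \<noteq> p6" using collinear_distinct[OF r2] by auto
    moreover have "r2 \<noteq> p0" using third_point_unique[of p0 p5 p6 p4] collinear_perms[OF r2] collinear_perms[OF c450] dd c013 c124 c235 c346 c450 by auto
    moreover have "r2 \<noteq> p2" using third_point_unique[of p5 p2 p6 p3] collinear_perms[OF r2] collinear_perms[OF c235] dd c013 c124 c235 c346 c450 by auto
    moreover have "r2 \<noteq> p3" using third_point_unique[of p3 p6 p5 p4] collinear_perms[OF r2] collinear_perms[OF c346] dd c013 c124 c235 c346 c450 by auto
    moreover have "r2 \<noteq> p4" using third_point_unique[of p4 p5 p6 p0] collinear_perms[OF r2] collinear_perms[OF c450] dd c013 c124 c235 c346 c450 by auto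
    ultimately have "r2 = p1" using inP by blast
    thus ?thesis using r2 by simp
  qed
  obtain r3 where r3: "collinear p6 p0 r3" using third_point_exists[of p6 p0] dd sub by auto
  have c602: "collinear p6 p0 p2"
  proof -
    have "r3 \<in> P" using collinear_in_P[OF r3] by simp
    moreover have "r3 \<noteq> p6" "r3 \<noteq> p0" using collinear_distinct[OF r3] by auto
    moreover have "r3 \<noteq> p1" using third_point_unique[of p0 p1 p6 p3] collinear_perms[OF r3] collinear_perms[OF c013] dd c013 c124 c235 c346 c450 c561 by auto
    moreover have "r3 \<noteq> p3" using third_point_unique[of p3 p6 p0 p4] collinear_perms[OF r3] collinear_perms[OF c346] dd c013 c124 c235 c346 c450 c561 by auto
    moreover have "r3 \<noteq> p4" using third_point_unique[of p4 p0 p6 p5] collinear_perms[OF r3] collinear_perms[OF c450] dd c013 c124 c235 c346 c450 c561 by auto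
    moreover have "r3 \<noteq> p5" using third_point_unique[of p5 p6 p0 p1] collinear_perms[OF r3] collinear_perms[OF c561] dd c013 c124 c235 c346 c450 c561 by auto
    ultimately have "r3 = p2" using inP by blast
    thus ?thesis using r3 by simp
  qed
  show ?thesis using c450 c561 c602 by blast
qed

lemma fano_labelling:
  obtains p :: "nat \<Rightarrow> 'a" where "inj_on p {..<7}" "P = p ` {..<7}"
    "\<And>b::nat. b < 7 \<Longrightarrow> collinear (p b) (p ((b + 1) mod 7)) (p ((b + 3) mod 7))"
proof -
  obtain p0 p1 p2 p3 p4 p5 p6 where dist: "distinct [p0, p1, p2, p3, p4, p5, p6]"
    and Peq: "P = {p0, p1, p2, p3, p4, p5, p6}"
    and lines: "collinear p0 p1 p3" "collinear p1 p2 p4" "collinear p2 p3 p5" "collinear p3 p4 p6"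
    using four_lines by blast
  note more_lines = closing_lines[OF dist Peq lines]
  let ?ps = "[p0, p1, p2, p3, p4, p5, p6]"
  show ?thesis
  proof
    show "inj_on (nth ?ps) {..<7}" using dist by (simp add: inj_on_nth)
    show "P = nth ?ps ` {..<7}" unfolding Peq lessThan_atLeast0 by (subst nth_image) simp_all
    show "collinear (?ps ! b) (?ps ! ((b + 1) mod 7)) (?ps ! ((b + 3) mod 7))" if "b < 7" for b
      using that lines more_lines unfolding less_7_cases by (elim disjE) simp_all
  qed
qed

lemma fano_lines:
  obtains p line :: "nat \<Rightarrow> 'a" where "inj_on p {..<7}" "P = p ` {..<7}" "\<And>b. b < 7 \<Longrightarrow> line b \<in> L"
    "\<And>a b. a < 7 \<Longrightarrow> b < 7 \<Longrightarrow> E (p a) (line b) \<longleftrightarrow> heawood_inc a b"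
proof -
  obtain p :: "nat \<Rightarrow> 'a" where p_inj: "inj_on p {..<7}" and P_eq: "P = p ` {..<7}"
    and p_lines: "\<And>b::nat. b < 7 \<Longrightarrow> collinear (p b) (p ((b + 1) mod 7)) (p ((b + 3) mod 7))"
    using fano_labelling by metis
  define line where "line b = (SOME l. E (p b) l \<and> E (p ((b + 1) mod 7)) l \<and> E (p ((b + 3) mod 7)) l)" for b
  have line_edges: "E (p b) (line b) \<and> E (p ((b + 1) mod 7)) (line b) \<and> E (p ((b + 3) mod 7)) (line b)"
    if "b < 7" for b
  proof -
    have "\<exists>l. E (p b) l \<and> E (p ((b + 1) mod 7)) l \<and> E (p ((b + 3) mod 7)) l"
      using p_lines[OF that] unfolding collinear_def by blast
    thus ?thesis unfolding line_def by (rule someI_ex)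
  qed
  have "E (p a) (line b) \<longleftrightarrow> heawood_inc a b" if ab: "a < 7" "b < 7" for a b
  proof -
    have p_eq: "p a = p c \<longleftrightarrow> a = c" if "c < 7" for c using inj_on_eq_iff[OF p_inj] ab(1) that by simp
    have "E (p a) (line b) \<longleftrightarrow> p a \<in> nbhd V E (line b)"
      using edge_sym[of "p a" "line b"] edge_sym[of "line b" "p a"] mem_nbhd_iff by blast
    also have "\<dots> \<longleftrightarrow> p a \<in> {p b, p ((b + 1) mod 7), p ((b + 3) mod 7)}"
      using nbhd_line[OF p_lines[OF ab(2)]] line_edges[OF ab(2)] by simp
    also have "\<dots> \<longleftrightarrow> a \<in> {b, (b + 1) mod 7, (b + 3) mod 7}" using p_eq ab(2) by simp
    finally show ?thesis using heawood_inc_iff ab by simp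
  qed
  moreover have "line b \<in> L" if "b < 7" for b
    using line_edges[OF that] edge_P_L[of "p b"] P_eq that by blast
  ultimately show ?thesis using that p_inj P_eq by blast
qed

context
  fixes p line :: "nat \<Rightarrow> 'a"
  assumes p_inj: "inj_on p {..<7}" and P_eq: "P = p ` {..<7}" and line_L: "\<And>b. b < 7 \<Longrightarrow> line b \<in> L"
    and incidence: "\<And>a b. a < 7 \<Longrightarrow> b < 7 \<Longrightarrow> E (p a) (line b) \<longleftrightarrow> heawood_inc a b"
begin

lemma inj_on_lines: "inj_on line {..<7}"
proof (rule inj_onI)
  fix b b' assume b: "b \<in> {..<7}" "b' \<in> {..<7}" and eq: "line b = line b'"
  have "heawood_inc b b" "heawood_inc b' b'" using b by (simp_all add: heawood_inc_def)
  hence "heawood_inc b b'" "heawood_inc b' b" using incidence b eq by (metis lessThan_iff)+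
  thus "b = b'" using heawood_line_determined b by simp
qed

lemma L_eq_lines: "L = line ` {..<7}"
proof
  show "L \<subseteq> line ` {..<7}"
  proof
    fix l assume l: "l \<in> L"
    hence "card (nbhd V E l) = 3" using card_nbhd V_eq by blast
    then obtain x y z where "nbhd V E l = {x, y, z}" "x \<noteq> y" by (auto simp: card_3_iff)
    hence "E l x" "E l y" "x \<noteq> y" by (auto simp: mem_nbhd_iff[symmetric])
    hence xy: "x \<in> P" "y \<in> P" "x \<noteq> y" "E x l" "E y l"
      using edge_L_P[OF _ l] edge_sym[of l x] edge_sym[of l y] by auto
    then obtain a a' where a: "a < 7" "a' < 7" "x = p a" "y = p a'" using P_eq by auto
    then obtain b where "b < 7" "heawood_inc a b" "heawood_inc a' b"
      using heawood_points_on_line xy(3) by blast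
    hence "E x (line b)" "E y (line b)" using incidence a by auto
    hence "l = line b" using unique_line[OF xy(1-3)] xy(4,5) by blast
    thus "l \<in> line ` {..<7}" using \<open>b < 7\<close> by blast
  qed
qed (use line_L in blast)

lemma is_heawood_if_labelled: "is_heawood V E"
proof -
  define g where "g n = (if n < 7 then p n else line (n - 7))" for n
  have "inj_on g {0..<14}"
  proof (rule inj_onI)
    fix m n assume mn: "m \<in> {0..<14}" "n \<in> {0..<14}" "g m = g n"
    have point_line: "p a \<noteq> line b" if "a < 7" "b < 7" for a b
      using that line_L[OF that(2)] disjoint by (auto simp: P_eq)
    show "m = n"
    proof (cases "m < 7"; cases "n < 7")
      assume "m < 7" "n < 7"
      thus "m = n" using mn(3) inj_onD[OF p_inj, of m n] by (simp add: g_def)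
    next
      assume "\<not> m < 7" "\<not> n < 7"
      hence "m - 7 = n - 7" using mn inj_onD[OF inj_on_lines, of "m - 7" "n - 7"] by (simp add: g_def)
      thus "m = n" using \<open>\<not> m < 7\<close> \<open>\<not> n < 7\<close> by simp
    next
      assume "m < 7" "\<not> n < 7"
      thus "m = n" using mn point_line[of m "n - 7"] by (simp add: g_def)
    next
      assume "\<not> m < 7" "n < 7"
      moreover have "m - 7 < 7" using mn(1) by simp
      ultimately show "m = n" using mn point_line[of n "m - 7"] by (auto simp: g_def)
    qed
  qed
  moreover have "g ` {0..<14} = V"
  proof -
    have "g ` {..<7} = P" unfolding P_eq by (intro image_cong) (auto simp: g_def)
    moreover have "g ` (\<lambda>b. b + 7) ` {..<7} = L" unfolding L_eq_lines image_image by (simp add: g_def)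
    ultimately show ?thesis unfolding lessThan_14_split image_Un V_eq by simp
  qed
  ultimately have "bij_betw g {0..<14} V" by (simp add: bij_betw_def)
  moreover have "E (g m) (g n) \<longleftrightarrow> heawood_E m n" if "m \<in> {0..<14}" "n \<in> {0..<14}" for m n
  proof (cases "m < 7"; cases "n < 7")
    assume "m < 7" "n < 7"
    hence "g m \<in> P" "g n \<in> P" using P_eq by (auto simp: g_def)
    thus ?thesis using \<open>m < 7\<close> \<open>n < 7\<close> edge_P_L[of "g m" "g n"] disjoint by (auto simp: heawood_E_def)
  next
    assume "\<not> m < 7" "\<not> n < 7"
    hence "g m \<in> L" "g n \<in> L" using that line_L by (auto simp: g_def)
    thus ?thesis using \<open>\<not> m < 7\<close> \<open>\<not> n < 7\<close> edge_L_P[of "g m" "g n"] disjoint by (auto simp: heawood_E_def)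
  next
    assume "m < 7" "\<not> n < 7"
    thus ?thesis using that incidence[of m "n - 7"] by (simp add: g_def heawood_E_def)
  next
    assume "\<not> m < 7" "n < 7"
    have "E (line (m - 7)) (p n) \<longleftrightarrow> E (p n) (line (m - 7))"
      using edge_sym[of "line (m - 7)" "p n"] edge_sym[of "p n" "line (m - 7)"] by blast
    thus ?thesis using \<open>\<not> m < 7\<close> \<open>n < 7\<close> that incidence[of n "m - 7"] by (simp add: g_def heawood_E_def)
  qed
  ultimately show ?thesis unfolding is_heawood_def heawood_V_def by (rule graph_iso_by_inverse)
qed

end

lemma is_heawood: "is_heawood V E"
  using fano_lines is_heawood_if_labelled by metis

end

section \<open>Open packings and signed total domination\<close>

lemma sum_plus_minus_one:
  assumes "finite A"
  shows "(\<Sum>u\<in>A. if u \<in> I then -1 else 1 :: int) = int (card A) - 2 * int (card (A \<inter> I))"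
proof -
  have "(\<Sum>u\<in>A. if u \<in> I then -1 else 1 :: int) = - int (card (A \<inter> I)) + int (card (A - I))"
    using assms by (simp add: sum.If_cases Int_def Diff_eq)
  also have "card (A - I) = card A - card (A \<inter> I)" using assms by (simp add: card_Diff_subset_Int)
  also have "card (A \<inter> I) \<le> card A" using assms by (intro card_mono) auto
  hence "- int (card (A \<inter> I)) + int (card A - card (A \<inter> I)) = int (card A) - 2 * int (card (A \<inter> I))"
    by (simp add: of_nat_diff)
  finally show ?thesis .
qed

lemma finite_STDF_sums:
  assumes "finite V"
  shows "finite {(\<Sum>v\<in>V. f v) | f. is_STDF V E f}"
proof (rule finite_subset)
  show "{(\<Sum>v\<in>V. f v) | f. is_STDF V E f} \<subseteq> {- int (card V) .. int (card V)}"
  proof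
    fix x assume "x \<in> {(\<Sum>v\<in>V. f v) | f. is_STDF V E f}"
    then obtain f where f: "x = (\<Sum>v\<in>V. f v)" "is_STDF V E f" by blast
    have "\<bar>\<Sum>v\<in>V. f v\<bar> \<le> (\<Sum>v\<in>V. \<bar>f v\<bar>)" by (rule sum_abs)
    also have "\<dots> = (\<Sum>v\<in>V. 1)" using f(2) unfolding is_STDF_def by (intro sum.cong) auto
    finally show "x \<in> {- int (card V) .. int (card V)}" using f(1) by (simp add: abs_le_iff)
  qed
qed simp

lemma gamma_st_le:
  assumes "finite V" "is_STDF V E f"
  shows "gamma_st V E \<le> (\<Sum>v\<in>V. f v)"
  unfolding gamma_st_def using assms by (intro Min_le finite_STDF_sums) blast+

context cubic_graph
begin

lemma component_independent_set:
  assumes r: "r \<in> V"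
  shows "(\<exists>I\<subseteq>component r. independent H I \<and> card (component r) \<le> 6 * card I)
    \<or> (card (component r) = 7 \<and> (\<forall>a\<in>component r. \<forall>b\<in>component r. a \<noteq> b \<longrightarrow> H a b))"
proof -
  interpret bounded_degree_component H "component r" 6
    using bounded_degree_component[OF r] .
  have "r \<in> component r" by (simp add: component_def)
  thus ?thesis using independent_set_or_complete by fastforce
qed

lemma independent_Un_components:
  assumes "independent H I1" "I1 \<subseteq> component a" "independent H I2" "I2 \<subseteq> component b"
    and "component a \<inter> component b = {}"
  shows "independent H (I1 \<union> I2)"
proof -
  have "b' \<in> component c" if "H a' b'" "a' \<in> component c" for a' b' c
    using that by (auto simp: component_def intro: rtranclp.rtrancl_into_rtrancl)
  thus ?thesis using assms common_nbr_sym unfolding independent_def by blast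
qed

lemma is_heawood_if_complete_side:
  assumes "V = P \<union> L" "P \<inter> L = {}" "\<And>a b. E a b \<Longrightarrow> a \<in> P \<longleftrightarrow> b \<in> L" "card P = 7"
    and "\<forall>a\<in>P. \<forall>b\<in>P. a \<noteq> b \<longrightarrow> H a b"
  shows "is_heawood V E"
proof -
  interpret point_line_graph V E P L
    using assms by unfold_locales auto
  show ?thesis by (rule is_heawood)
qed

lemma side_independent_set:
  assumes not_heawood: "\<not> is_heawood V E" and r: "r \<in> V"
    and V_eq: "V = component r \<union> L" and disj: "component r \<inter> L = {}"
    and bipartite: "\<And>a b. E a b \<Longrightarrow> a \<in> component r \<longleftrightarrow> b \<in> L"
  shows "\<exists>I\<subseteq>component r. independent H I \<and> card (component r) \<le> 6 * card I"
  using component_independent_set[OF r] is_heawood_if_complete_side[OF V_eq disj bipartite] not_heawood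
  by blast

lemma components_cover:
  assumes conn: "connected_graph V E" and "E x m"
  shows "V = component x \<union> component m"
proof
  have "x \<in> V" "m \<in> V" using edge_in_V[OF \<open>E x m\<close>] by auto
  thus "component x \<union> component m \<subseteq> V" using component_subset by blast
  show "V \<subseteq> component x \<union> component m"
  proof
    fix y assume "y \<in> V"
    hence "E\<^sup>*\<^sup>* x y" using conn \<open>x \<in> V\<close> by (simp add: connected_graph_def)
    thus "y \<in> component x \<union> component m"
    proof (induction rule: rtranclp_induct)
      case base
      thus ?case by (simp add: component_def)
    next
      case (step y z)
      have "y \<in> component x \<Longrightarrow> z \<in> component m" "y \<in> component m \<Longrightarrow> z \<in> component x"
        using edge_maps_component[OF \<open>E x m\<close> _ step.hyps(2)]
          edge_maps_component[OF edge_sym[OF \<open>E x m\<close>] _ step.hyps(2)] by auto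
      thus ?case using step.IH by blast
    qed
  qed
qed

lemma open_packing_two_components:
  assumes not_heawood: "\<not> is_heawood V E" and x: "x \<in> V" and m: "m \<in> V"
    and V_eq: "V = component x \<union> component m" and disj: "component x \<inter> component m = {}"
    and bipartite: "\<And>a b. E a b \<Longrightarrow> a \<in> component x \<longleftrightarrow> b \<in> component m"
  shows "\<exists>I\<subseteq>V. independent H I \<and> card V \<le> 6 * card I"
proof -
  have bipartite': "a \<in> component m \<longleftrightarrow> b \<in> component x" if "E a b" for a b
    using bipartite[OF that] bipartite[OF edge_sym[OF that]] edge_in_V[OF that] V_eq disj by blast
  obtain I1 where I1: "I1 \<subseteq> component x" "independent H I1" "card (component x) \<le> 6 * card I1"
    using side_independent_set[OF not_heawood x V_eq disj bipartite] by blast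
  obtain I2 where I2: "I2 \<subseteq> component m" "independent H I2" "card (component m) \<le> 6 * card I2"
    using side_independent_set[OF not_heawood m _ _ bipartite'] V_eq disj by blast
  have fin: "finite (component x)" "finite (component m)"
    using component_subset[OF x] component_subset[OF m] finite_V finite_subset by blast+
  have "card (I1 \<union> I2) = card I1 + card I2"
    using I1(1) I2(1) disj fin by (intro card_Un_disjoint) (auto intro: finite_subset)
  moreover have "card (component x \<union> component m) = card (component x) + card (component m)"
    using fin disj by (rule card_Un_disjoint)
  ultimately have "card V \<le> 6 * card (I1 \<union> I2)" using I1(3) I2(3) by (simp add: V_eq[symmetric])
  moreover have "I1 \<union> I2 \<subseteq> V" using I1(1) I2(1) component_subset[OF x] component_subset[OF m] by blast
  ultimately show ?thesis using independent_Un_components[OF I1(2,1) I2(2,1) disj] by blast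
qed

text \<open>The two ends of an edge x m generate all H-components; if they differ, the graph is
  bipartite with these components as sides.\<close>

lemma large_open_packing:
  assumes conn: "connected_graph V E" and not_heawood: "\<not> is_heawood V E"
  shows "\<exists>I\<subseteq>V. independent H I \<and> card V \<le> 6 * card I"
proof -
  obtain x where x: "x \<in> V" using conn by (auto simp: connected_graph_def)
  have "nbhd V E x \<noteq> {}" using card_nbhd[OF x] by auto
  then obtain m where xm: "E x m" by (auto simp: mem_nbhd_iff)
  have m: "m \<in> V" using edge_in_V[OF xm] by simp
  have V_eq: "V = component x \<union> component m" using components_cover[OF conn xm] .
  show ?thesis
  proof (cases "m \<in> component x")
    case True
    hence V_x: "V = component x" using V_eq component_eq[OF True] by simp
    have "card (component x) \<noteq> 7" using even_card_V by (intro notI) (simp add: V_x[symmetric])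
    then obtain I where "I \<subseteq> component x" "independent H I" "card (component x) \<le> 6 * card I"
      using component_independent_set[OF x] by blast
    thus ?thesis by (auto simp: V_x[symmetric])
  next
    case False
    have disj: "component x \<inter> component m = {}"
    proof (rule ccontr)
      assume "component x \<inter> component m \<noteq> {}"
      then obtain y where "y \<in> component x" "y \<in> component m" by blast
      hence "component x = component m" using component_eq[of y x] component_eq[of y m] by simp
      thus False using False by (simp add: component_def)
    qed
    have "a \<in> component x \<longleftrightarrow> b \<in> component m" if "E a b" for a b
      using edge_maps_component[OF xm _ that] edge_maps_component[OF edge_sym[OF xm] _ that]
        edge_in_V[OF that] V_eq disj by blast
    thus ?thesis using open_packing_two_components[OF not_heawood x m V_eq disj] by blast
  qed
qed

lemma STDF_of_open_packing:
  assumes I: "I \<subseteq> V" "independent H I"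
  shows "is_STDF V E (\<lambda>v. if v \<in> I then -1 else 1)"
  unfolding is_STDF_def
proof (intro conjI ballI)
  fix v assume v: "v \<in> V"
  have "a = b" if "a \<in> nbhd V E v \<inter> I" "b \<in> nbhd V E v \<inter> I" for a b
  proof (rule ccontr)
    assume "a \<noteq> b"
    moreover have "E a v" "E b v" using that edge_sym by (auto simp: mem_nbhd_iff)
    ultimately have "H a b" using that I(1) by (auto simp: common_nbr_def)
    thus False using I(2) that by (auto simp: independent_def)
  qed
  hence "card (nbhd V E v \<inter> I) \<le> 1" using finite_nbhd by (simp add: card_le_Suc0_iff_eq)
  thus "1 \<le> (\<Sum>u\<in>nbhd V E v. if u \<in> I then -1 else 1 :: int)"
    using sum_plus_minus_one[OF finite_nbhd] card_nbhd[OF v] by simp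
qed simp

lemma gamma_st_upper_bound:
  assumes "connected_graph V E" "\<not> is_heawood V E"
  shows "3 * gamma_st V E \<le> 2 * int (card V)"
proof -
  obtain I where I: "I \<subseteq> V" "independent H I" "card V \<le> 6 * card I"
    using large_open_packing[OF assms] by blast
  have "gamma_st V E \<le> (\<Sum>v\<in>V. if v \<in> I then -1 else 1)"
    by (rule gamma_st_le[OF finite_V STDF_of_open_packing[OF I(1,2)]])
  also have "\<dots> = int (card V) - 2 * int (card I)"
    using sum_plus_minus_one[OF finite_V] I(1) by (simp add: Int_absorb1)
  finally show ?thesis using I(3) by linarith
qed

end

section \<open>A cubic graph attaining the bound\<close>

definition sharp_nbrs :: "nat \<Rightarrow> nat set" where
  "sharp_nbrs v = (if v = 0 then {6,8,9} else if v = 1 then {8,10,11} else if v = 2 then {7,9,11}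
     else if v = 3 then {6,7,11} else if v = 4 then {6,9,10} else if v = 5 then {7,8,10}
     else if v = 6 then {0,3,4} else if v = 7 then {2,3,5} else if v = 8 then {0,1,5}
     else if v = 9 then {0,2,4} else if v = 10 then {1,4,5} else if v = 11 then {1,2,3} else {})"

definition sharp_V :: "nat set" where "sharp_V = {0,1,2,3,4,5,6,7,8,9,10,11}"
definition sharp_E :: "nat \<Rightarrow> nat \<Rightarrow> bool" where "sharp_E x y \<longleftrightarrow> y \<in> sharp_nbrs x"

lemma sharp_V_iff: "v \<in> sharp_V \<longleftrightarrow> v = 0 \<or> v = 1 \<or> v = 2 \<or> v = 3 \<or> v = 4 \<or> v = 5 \<or> v = 6 \<or> v = 7
   \<or> v = 8 \<or> v = 9 \<or> v = 10 \<or> v = 11"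
  by (simp add: sharp_V_def)

lemma sharp_nbrs_subset: "sharp_nbrs v \<subseteq> sharp_V"
  by (simp add: sharp_nbrs_def sharp_V_def)

lemma sharp_nbrs_outside: "v \<notin> sharp_V \<Longrightarrow> sharp_nbrs v = {}"
  unfolding sharp_V_iff sharp_nbrs_def by auto

lemma nbhd_sharp: "nbhd sharp_V sharp_E v = sharp_nbrs v"
  using sharp_nbrs_subset unfolding nbhd_def sharp_E_def by auto

lemma simple_sharp: "simple_graph sharp_V sharp_E"
proof -
  have sym: "sharp_E x y \<Longrightarrow> sharp_E y x" for x y
  proof -
    assume "sharp_E x y"
    hence "x \<in> sharp_V" using sharp_nbrs_outside unfolding sharp_E_def by fastforce
    thus ?thesis using \<open>sharp_E x y\<close> unfolding sharp_V_iff sharp_E_def sharp_nbrs_def by (auto split: if_splits)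
  qed
  have irr: "\<not> sharp_E x x" for x
    by (cases "x \<in> sharp_V") (auto simp: sharp_V_iff sharp_E_def sharp_nbrs_def sharp_nbrs_outside)
  have inW: "sharp_E x y \<Longrightarrow> x \<in> sharp_V \<and> y \<in> sharp_V" for x y
    using sym[of x y] sharp_nbrs_subset unfolding sharp_E_def by blast
  show ?thesis unfolding simple_graph_def
    using sym irr inW by (auto simp: sharp_V_def)
qed

lemma cubic_sharp: "cubic sharp_V sharp_E"
  unfolding cubic_def nbhd_sharp by (simp add: sharp_V_def sharp_nbrs_def)

lemma connected_sharp: "connected_graph sharp_V sharp_E"
proof -
  have e: "sharp_E x y" if "y \<in> sharp_nbrs x" for x y using that by (simp add: sharp_E_def)
  have sym: "sharp_E x y \<Longrightarrow> sharp_E y x" for x y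
    using simple_sharp unfolding simple_graph_def by blast
  have r0: "sharp_E\<^sup>*\<^sup>* 0 v" if "v \<in> sharp_V" for v
  proof -
    have s: "sharp_E\<^sup>*\<^sup>* a c" if "sharp_E\<^sup>*\<^sup>* a b" "sharp_E b c" for a b c
      using that by (rule rtranclp.rtrancl_into_rtrancl)
    have p0: "sharp_E\<^sup>*\<^sup>* 0 0" by simp
    have p6: "sharp_E\<^sup>*\<^sup>* 0 6" by (rule s[OF p0]) (simp add: sharp_E_def sharp_nbrs_def)
    have p8: "sharp_E\<^sup>*\<^sup>* 0 8" by (rule s[OF p0]) (simp add: sharp_E_def sharp_nbrs_def)
    have p9: "sharp_E\<^sup>*\<^sup>* 0 9" by (rule s[OF p0]) (simp add: sharp_E_def sharp_nbrs_def)
    have p3: "sharp_E\<^sup>*\<^sup>* 0 3" by (rule s[OF p6]) (simp add: sharp_E_def sharp_nbrs_def)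
    have p4: "sharp_E\<^sup>*\<^sup>* 0 4" by (rule s[OF p6]) (simp add: sharp_E_def sharp_nbrs_def)
    have p1: "sharp_E\<^sup>*\<^sup>* 0 1" by (rule s[OF p8]) (simp add: sharp_E_def sharp_nbrs_def)
    have p5: "sharp_E\<^sup>*\<^sup>* 0 5" by (rule s[OF p8]) (simp add: sharp_E_def sharp_nbrs_def)
    have p2: "sharp_E\<^sup>*\<^sup>* 0 2" by (rule s[OF p9]) (simp add: sharp_E_def sharp_nbrs_def)
    have p10: "sharp_E\<^sup>*\<^sup>* 0 10" by (rule s[OF p1]) (simp add: sharp_E_def sharp_nbrs_def)
    have p11: "sharp_E\<^sup>*\<^sup>* 0 11" by (rule s[OF p1]) (simp add: sharp_E_def sharp_nbrs_def)
    have p7: "sharp_E\<^sup>*\<^sup>* 0 7" by (rule s[OF p2]) (simp add: sharp_E_def sharp_nbrs_def)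
    show ?thesis using that p0 p1 p2 p3 p4 p5 p6 p7 p8 p9 p10 p11 unfolding sharp_V_iff by auto
  qed
  have symr: "sharp_E\<^sup>*\<^sup>* b a" if "sharp_E\<^sup>*\<^sup>* a b" for a b
    using that by (induction rule: rtranclp_induct) (auto intro: converse_rtranclp_into_rtranclp sym)
  have "sharp_E\<^sup>*\<^sup>* u v" if "u \<in> sharp_V" "v \<in> sharp_V" for u v
    using rtranclp_trans[OF symr[OF r0[OF that(1)]] r0[OF that(2)]] .
  thus ?thesis unfolding connected_graph_def by (auto simp: sharp_V_def)
qed

lemma not_heawood_sharp: "\<not> is_heawood sharp_V sharp_E"
proof
  assume "is_heawood sharp_V sharp_E"
  then obtain h where "bij_betw h sharp_V heawood_V"
    unfolding is_heawood_def graph_iso_def by blast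
  hence "card sharp_V = card heawood_V" by (rule bij_betw_same_card)
  thus False by (simp add: sharp_V_def heawood_V_def)
qed

lemma gamma_st_sharp: "gamma_st sharp_V sharp_E = 8"
proof -
  define S where "S = {(\<Sum>v\<in>sharp_V. f v) | f. is_STDF sharp_V sharp_E f}"
  have fin: "finite S" unfolding S_def by (rule finite_STDF_sums) (simp add: sharp_V_def)
  define f0 :: "nat \<Rightarrow> int" where "f0 v = (if v = 0 \<or> v = 6 then -1 else 1)" for v
  have st0: "is_STDF sharp_V sharp_E f0"
    unfolding is_STDF_def nbhd_sharp by (simp add: sharp_V_def sharp_nbrs_def f0_def)
  have s0: "(\<Sum>v\<in>sharp_V. f0 v) = 8" by (simp add: sharp_V_def f0_def)
  have low: "8 \<le> (\<Sum>v\<in>sharp_V. f v)" if st: "is_STDF sharp_V sharp_E f" for f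
  proof -
    have val: "f v = -1 \<or> f v = 1" if "v \<in> sharp_V" for v using st that unfolding is_STDF_def by auto
    have c: "1 \<le> (\<Sum>u\<in>sharp_nbrs v. f u)" if "v \<in> sharp_V" for v using st that unfolding is_STDF_def nbhd_sharp by auto
    have v0: "f 0 = -1 \<or> f 0 = 1" "f 1 = -1 \<or> f 1 = 1" "f 2 = -1 \<or> f 2 = 1" "f 3 = -1 \<or> f 3 = 1"
      "f 4 = -1 \<or> f 4 = 1" "f 5 = -1 \<or> f 5 = 1" "f 6 = -1 \<or> f 6 = 1" "f 7 = -1 \<or> f 7 = 1"
      "f 8 = -1 \<or> f 8 = 1" "f 9 = -1 \<or> f 9 = 1" "f 10 = -1 \<or> f 10 = 1" "f 11 = -1 \<or> f 11 = 1"
      using val by (auto simp: sharp_V_def)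
    have c6: "1 \<le> f 0 + f 3 + f 4" using c[of 6] by (simp add: sharp_V_def sharp_nbrs_def)
    have c7: "1 \<le> f 2 + f 3 + f 5" using c[of 7] by (simp add: sharp_V_def sharp_nbrs_def)
    have c8: "1 \<le> f 0 + f 1 + f 5" using c[of 8] by (simp add: sharp_V_def sharp_nbrs_def)
    have c9: "1 \<le> f 0 + f 2 + f 4" using c[of 9] by (simp add: sharp_V_def sharp_nbrs_def)
    have c10: "1 \<le> f 1 + f 4 + f 5" using c[of 10] by (simp add: sharp_V_def sharp_nbrs_def)
    have c11: "1 \<le> f 1 + f 2 + f 3" using c[of 11] by (simp add: sharp_V_def sharp_nbrs_def)
    have c0: "1 \<le> f 6 + f 8 + f 9" using c[of 0] by (simp add: sharp_V_def sharp_nbrs_def)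
    have c1: "1 \<le> f 8 + f 10 + f 11" using c[of 1] by (simp add: sharp_V_def sharp_nbrs_def)
    have c2: "1 \<le> f 7 + f 9 + f 11" using c[of 2] by (simp add: sharp_V_def sharp_nbrs_def)
    have c3: "1 \<le> f 6 + f 7 + f 11" using c[of 3] by (simp add: sharp_V_def sharp_nbrs_def)
    have c4: "1 \<le> f 6 + f 9 + f 10" using c[of 4] by (simp add: sharp_V_def sharp_nbrs_def)
    have c5: "1 \<le> f 7 + f 8 + f 10" using c[of 5] by (simp add: sharp_V_def sharp_nbrs_def)
    have A: "4 \<le> f 0 + f 1 + f 2 + f 3 + f 4 + f 5"
      using v0(1-6) c6 c7 c8 c9 c10 c11 by smt
    have B: "4 \<le> f 6 + f 7 + f 8 + f 9 + f 10 + f 11"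
      using v0(7-12) c0 c1 c2 c3 c4 c5 by smt
    have "(\<Sum>v\<in>sharp_V. f v) = f 0 + f 1 + f 2 + f 3 + f 4 + f 5 + (f 6 + f 7 + f 8 + f 9 + f 10 + f 11)"
      by (simp add: sharp_V_def)
    thus ?thesis using A B by linarith
  qed
  have "Min S = 8"
    by (rule Min_eqI[OF fin]) (use low s0 st0 in \<open>auto simp: S_def\<close>)
  thus ?thesis unfolding gamma_st_def S_def .
qed

theorem theorem2p4:
  fixes V :: "'a set" and E :: "'a \<Rightarrow> 'a \<Rightarrow> bool"
  shows "(simple_graph V E \<and> connected_graph V E \<and> cubic V E \<and> \<not> is_heawood V E
            \<longrightarrow> 3 * gamma_st V E \<le> 2 * int (card V))
       \<and> (\<exists>(W :: nat set) F. simple_graph W F \<and> connected_graph W F \<and> cubic W F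
            \<and> \<not> is_heawood W F \<and> 3 * gamma_st W F = 2 * int (card W))"
proof (intro conjI impI; (elim conjE)?)
  assume "simple_graph V E" "connected_graph V E" "cubic V E" "\<not> is_heawood V E"
  then interpret cubic_graph V E by unfold_locales
  show "3 * gamma_st V E \<le> 2 * int (card V)"
    using gamma_st_upper_bound \<open>connected_graph V E\<close> \<open>\<not> is_heawood V E\<close> .
next
  have "3 * gamma_st sharp_V sharp_E = 2 * int (card sharp_V)"
    using gamma_st_sharp by (simp add: sharp_V_def)
  thus "\<exists>(W :: nat set) F. simple_graph W F \<and> connected_graph W F \<and> cubic W F
          \<and> \<not> is_heawood W F \<and> 3 * gamma_st W F = 2 * int (card W)"
    using simple_sharp connected_sharp cubic_sharp not_heawood_sharp by blast
qed

end
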